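(* Let $Q(z)=\sum_{i=0}^N a_iz^{N-i}$ ($a_0=1$) be a monic complex polynomial of degree $N\ge2$ with multiset of roots $S=\{\alpha_1,\dots,\alpha_N\}$. Then, with all equivalences $\sim$ holding up to positive constants depending only on $N$: (i) there is a root $\alpha\in S$ with $L_i(\alpha)\sim L_i$ for all integers $0\le i\le N/2$; (ii) for all integers $1\le r\le N/2$, $\Delta_r(\alpha_1,\dots,\alpha_N)\sim L_0L_1\cdots L_{r-1}$; (iii) for each such $r$ there exist a positive integer $h$ and polynomials $D_{r,1},\dots,D_{r,h}\in\mathbb{Z}[A_1,\dots,A_N]$ (depending only on $N,r$) such that $\Delta_r(\alpha_1,\dots,\alpha_N)\sim\sum_{q=1}^h|D_{r,q}(a_1,\dots,a_N)|^{1/q}$ for all such $Q$; (iv) for each $0\le k\le N-2$ there exist a positive integer $m_k$ and polynomials $\sigma_{k,i}\in\mathbb{Z}[A_1,\dots,A_N,Z]$, $1\le i\le m_k$ (depending only on $N,k$), such that for every root $\alpha$ of $Q$, $$\prod_{0\le i\le k}L_i(\alpha)\sim\sum_{i=1}^{m_k}|\sigma_{k,i}(a_1,\dots,a_N;\alpha)|^{1/i}.$$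
   Context: For a set $A\subseteq\mathbb{C}$, $d(A)=\sup_{\alpha,\beta\in A}|\alpha-\beta|$. Local cluster scales: for $\alpha\in S$ and $0\le k\le N-1$, $L_k(\alpha)=\inf d(S_{N-k}(\alpha))$ over sub-multisets $S_{N-k}(\alpha)\subseteq S$ with $N-k$ elements containing $\alpha$. Absolute cluster scales: $L_k=\inf_{\alpha\in S}L_k(\alpha)$, equivalently the minimum of $d(S_{N-k})$ over sub-multisets of $S$ with $N-k$ elements. The $r$-discriminant: $\Delta_r(\alpha_1,\dots,\alpha_N)=\sup\prod_{\nu=1}^r|\alpha_{i_\nu}-\alpha_{j_\nu}|$, the supremum over all $2r$-tuples $(i_1,\dots,i_r,j_1,\dots,j_r)$ of pairwise distinct integers in $\{1,\dots,N\}$. *)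

theory Defs
  imports "HOL-Analysis.Analysis" "HOL-Computational_Algebra.Polynomial" "HOL-Library.Multiset"
begin

definition diam :: "complex multiset \<Rightarrow> real" where
  "diam M = Sup {cmod (a - b) | a b. a \<in># M \<and> b \<in># M}"

definition Lloc :: "complex list \<Rightarrow> nat \<Rightarrow> complex \<Rightarrow> real" where
  "Lloc xs k \<alpha> = Inf {diam T | T. T \<subseteq># mset xs \<and> size T = length xs - k \<and> \<alpha> \<in># T}"

definition Labs :: "complex list \<Rightarrow> nat \<Rightarrow> real" where
  "Labs xs k = Inf {diam T | T. T \<subseteq># mset xs \<and> size T = length xs - k}"

text \<open>r-discriminant: sup over 2r pairwise distinct indices f 0..f(2r-1)
  (i_nu = f nu, j_nu = f (r+nu)), indices 0-based.\<close>
definition Delta :: "complex list \<Rightarrow> nat \<Rightarrow> real" where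
  "Delta xs r = Sup {(\<Prod>\<nu><r. cmod (xs ! (f \<nu>) - xs ! (f (r + \<nu>)))) | f.
      inj_on f {..<2*r} \<and> f ` {..<2*r} \<subseteq> {..<length xs}}"

text \<open>The monic polynomial with root list xs, and its coefficient a_i
  (Q(z) = sum_i a_i z^(N-i)).\<close>
definition monic_of :: "complex list \<Rightarrow> complex poly" where
  "monic_of xs = (\<Prod>x\<leftarrow>xs. [:-x, 1:])"

definition acoeff :: "complex list \<Rightarrow> nat \<Rightarrow> complex" where
  "acoeff xs i = coeff (monic_of xs) (length xs - i)"

text \<open>Multivariate integer polynomials, represented explicitly as lists of
  (coefficient, exponent list) monomials; variable j is v j.\<close>
type_synonym int_mpoly = "(int \<times> nat list) list"

definition mpoly_vars :: "nat \<Rightarrow> int_mpoly \<Rightarrow> bool" where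
  "mpoly_vars n p \<longleftrightarrow> (\<forall>(c, e) \<in> set p. length e \<le> n)"

definition mpoly_eval :: "int_mpoly \<Rightarrow> (nat \<Rightarrow> complex) \<Rightarrow> complex" where
  "mpoly_eval p v = (\<Sum>(c, e)\<leftarrow>p. of_int c * (\<Prod>j<length e. v j ^ (e ! j)))"

definition sim_by :: "real \<Rightarrow> real \<Rightarrow> real \<Rightarrow> real \<Rightarrow> bool" where
  "sim_by c C A B \<longleftrightarrow> c * B \<le> A \<and> A \<le> C * B"

end

theory Submission
  imports Defs
begin

(* Index the roots, so that cluster scales become diameters of subfamilies.
   (i) A root in an optimal cluster of size n - n div 2 can be exchanged into every optimal cluster
   of size at least n/2, which it must meet.
   (ii) r disjoint pairs of roots cannot all avoid an optimal cluster of each size n - s + 1, s <= r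
   (pigeonhole), which bounds the r-discriminant from above; pairing a central root with the root
   farthest from it and recursing on the remaining roots bounds it from below.
   (iii), (iv) Up to constants, the quantity is the largest modulus among the values of a fixed
   integer polynomial on tuples of distinct roots (products over pairs, resp. products of distances
   to alpha, the latter attained by a farthest-first enumeration). These values are the roots of a
   polynomial whose coefficients, multiplied by q!, are integer polynomials in the a_i (and alpha)
   by Newton's identities, and the largest root of a polynomial is comparable to
   sum_q |c_q|^(1/q) (Fujiwara's bound). *)

section \<open>Diameters and cluster scales of indexed families\<close>

lemma diameter_leI:
  fixes S :: "'a::metric_space set"
  assumes "S \<noteq> {}" "\<And>x y. x \<in> S \<Longrightarrow> y \<in> S \<Longrightarrow> dist x y \<le> d"
  shows "diameter S \<le> d"
  using assms by (auto simp: diameter_def intro!: cSUP_least)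

lemma diameter_le_twice_radius:
  fixes S :: "'a::metric_space set"
  assumes "S \<noteq> {}" "\<And>y. y \<in> S \<Longrightarrow> dist y c \<le> R"
  shows "diameter S \<le> 2 * R"
proof (rule diameter_leI[OF assms(1)])
  fix y z assume "y \<in> S" "z \<in> S"
  then show "dist y z \<le> 2 * R"
    using dist_triangle2[of y z c] assms(2)[of y] assms(2)[of z] by linarith
qed

lemma diameter_insert_le:
  fixes S :: "'a::metric_space set"
  assumes "bounded S" "t \<in> S"
  shows "diameter (insert u S) \<le> diameter S + dist u t"
proof (rule diameter_leI)
  fix y z assume y: "y \<in> insert u S" and z: "z \<in> insert u S"
  have near_u: "dist u w \<le> diameter S + dist u t" if "w \<in> S" for w
    using dist_triangle[of u w t] diameter_bounded_bound[OF assms(1) assms(2) that]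
    by (simp add: dist_commute)
  have in_S: "dist w w' \<le> diameter S + dist u t" if "w \<in> S" "w' \<in> S" for w w'
    using diameter_bounded_bound[OF assms(1) that] zero_le_dist[of u t] by linarith
  from y z show "dist y z \<le> diameter S + dist u t"
    using near_u in_S diameter_ge_0[OF assms(1)] zero_le_dist[of u t]
    by (elim insertE) (auto simp: dist_commute[of _ u])
qed simp

lemma dist_le_diameter_image:
  "finite I \<Longrightarrow> i \<in> I \<Longrightarrow> j \<in> I \<Longrightarrow> dist (x i) (x j) \<le> diameter (x ` I)"
  by (rule diameter_bounded_bound) (auto intro: finite_imp_bounded)

lemma diameter_image_mono: "finite J \<Longrightarrow> I \<subseteq> J \<Longrightarrow> diameter (x ` I) \<le> diameter (x ` J)"
  by (rule diameter_subset) (auto intro: finite_imp_bounded)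

lemma diameter_image_nonneg: "finite I \<Longrightarrow> 0 \<le> diameter (x ` I)"
  by (rule diameter_ge_0) (auto intro: finite_imp_bounded)

lemma exchange_into_meeting_subfamily:
  fixes x :: "'i \<Rightarrow> 'a::metric_space"
  assumes I: "finite I" "2 \<le> card I" "u \<notin> I" and I': "finite I'" "u \<in> I'" "I \<inter> I' \<noteq> {}"
  obtains J where "J \<subseteq> insert u I" "card J = card I" "u \<in> J"
    "diameter (x ` J) \<le> diameter (x ` I) + diameter (x ` I')"
proof -
  obtain t where t: "t \<in> I" "t \<in> I'" using I'(3) by blast
  have "card (I - {t}) \<noteq> 0" using I t(1) by (simp add: card_Diff_singleton)
  then have "I - {t} \<noteq> {}" by (metis card.empty)
  then obtain w where w: "w \<in> I" "w \<noteq> t" by blast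
  define J where "J = insert u (I - {w})"
  have "card J = card I"
    unfolding J_def using I w(1) by (simp add: card_Diff_singleton)
  moreover have "diameter (x ` J) \<le> diameter (x ` (I - {w})) + dist (x u) (x t)"
    unfolding J_def image_insert
    by (rule diameter_insert_le) (use I(1) t(1) w in \<open>auto intro: finite_imp_bounded\<close>)
  moreover have "diameter (x ` (I - {w})) \<le> diameter (x ` I)"
    using diameter_image_mono[OF I(1)] by blast
  moreover have "dist (x u) (x t) \<le> diameter (x ` I')"
    using dist_le_diameter_image[OF I'(1,2) t(2)] .
  ultimately show ?thesis using that[of J] unfolding J_def by fastforce
qed

definition cluster_scale :: "('i \<Rightarrow> 'a::metric_space) \<Rightarrow> 'i set \<Rightarrow> nat \<Rightarrow> real" where
  "cluster_scale x A k = Inf {diameter (x ` I) | I. I \<subseteq> A \<and> card I = card A - k}"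

definition local_cluster_scale :: "('i \<Rightarrow> 'a::metric_space) \<Rightarrow> 'i set \<Rightarrow> nat \<Rightarrow> 'a \<Rightarrow> real" where
  "local_cluster_scale x A k a =
     Inf {diameter (x ` I) | I. I \<subseteq> A \<and> card I = card A - k \<and> a \<in> x ` I}"

lemma finite_subfamily_diameters: "finite A \<Longrightarrow> finite {diameter (x ` I) | I. I \<subseteq> A \<and> P I}"
  by (rule finite_subset[of _ "(\<lambda>I. diameter (x ` I)) ` Pow A"]) auto

lemma Inf_subfamily_diameters_le:
  "finite A \<Longrightarrow> I \<subseteq> A \<Longrightarrow> P I \<Longrightarrow> Inf {diameter (x ` I) | I. I \<subseteq> A \<and> P I} \<le> diameter (x ` I)"
  by (rule cInf_le_finite[OF finite_subfamily_diameters]) (auto intro!: exI[of _ I])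

lemma Inf_subfamily_diameters_attained:
  assumes "finite A" "I0 \<subseteq> A" "P I0"
  obtains I where "I \<subseteq> A" "P I" "Inf {diameter (x ` I) | I. I \<subseteq> A \<and> P I} = diameter (x ` I)"
proof -
  let ?S = "{diameter (x ` I) | I. I \<subseteq> A \<and> P I}"
  have fin: "finite ?S" by (rule finite_subfamily_diameters[OF assms(1)])
  have ne: "?S \<noteq> {}" using assms by blast
  have "Inf ?S \<in> ?S"
    unfolding cInf_eq_Min[OF fin ne] by (rule Min_in[OF fin ne])
  then show ?thesis using that by blast
qed

lemma cluster_scale_le:
  "finite A \<Longrightarrow> I \<subseteq> A \<Longrightarrow> card I = card A - k \<Longrightarrow> cluster_scale x A k \<le> diameter (x ` I)"
  unfolding cluster_scale_def by (rule Inf_subfamily_diameters_le)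

lemma cluster_scale_attained:
  assumes "finite A"
  obtains I where "I \<subseteq> A" "card I = card A - k" "cluster_scale x A k = diameter (x ` I)"
proof -
  have "card A - k \<le> card A" by simp
  then obtain I0 where "I0 \<subseteq> A" "card I0 = card A - k"
    by (rule obtain_subset_with_card_n)
  then obtain I where "I \<subseteq> A" "card I = card A - k"
    "Inf {diameter (x ` I) | I. I \<subseteq> A \<and> card I = card A - k} = diameter (x ` I)"
    by (rule Inf_subfamily_diameters_attained[OF assms])
  then show ?thesis using that unfolding cluster_scale_def by blast
qed

lemma local_cluster_scale_le:
  "finite A \<Longrightarrow> I \<subseteq> A \<Longrightarrow> card I = card A - k \<Longrightarrow> i \<in> I \<Longrightarrow>
    local_cluster_scale x A k (x i) \<le> diameter (x ` I)"
  unfolding local_cluster_scale_def by (rule Inf_subfamily_diameters_le) auto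

lemma local_cluster_scale_attained:
  assumes "finite A" "i \<in> A" "k < card A"
  obtains I where "I \<subseteq> A" "card I = card A - k" "x i \<in> x ` I"
    "local_cluster_scale x A k (x i) = diameter (x ` I)"
proof -
  have "card A - k - 1 \<le> card (A - {i})" using assms by (simp add: card_Diff_singleton)
  then obtain I1 where I1: "I1 \<subseteq> A - {i}" "card I1 = card A - k - 1"
    by (rule obtain_subset_with_card_n)
  have "i \<notin> I1" using I1(1) by blast
  then have "insert i I1 \<subseteq> A" "card (insert i I1) = card A - k \<and> x i \<in> x ` insert i I1"
    using assms I1 finite_subset[OF I1(1)] by auto
  then obtain I where "I \<subseteq> A" "card I = card A - k \<and> x i \<in> x ` I"
    "Inf {diameter (x ` I) | I. I \<subseteq> A \<and> card I = card A - k \<and> x i \<in> x ` I} = diameter (x ` I)"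
    by (rule Inf_subfamily_diameters_attained[OF assms(1)])
  then show ?thesis using that unfolding local_cluster_scale_def by blast
qed

lemma cluster_scale_nonneg:
  assumes "finite A"
  shows "0 \<le> cluster_scale x A k"
proof -
  obtain I where "I \<subseteq> A" "cluster_scale x A k = diameter (x ` I)"
    using cluster_scale_attained[OF assms] .
  then show ?thesis using diameter_image_nonneg[OF finite_subset[OF _ assms]] by simp
qed

lemma cluster_scale_le_local:
  assumes "finite A" "i \<in> A" "k < card A"
  shows "cluster_scale x A k \<le> local_cluster_scale x A k (x i)"
proof -
  obtain I where "I \<subseteq> A" "card I = card A - k" "local_cluster_scale x A k (x i) = diameter (x ` I)"
    using local_cluster_scale_attained[OF assms] .
  then show ?thesis using cluster_scale_le[OF assms(1)] by simp
qed

lemma local_cluster_scale_nonneg: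
  "finite A \<Longrightarrow> i \<in> A \<Longrightarrow> k < card A \<Longrightarrow> 0 \<le> local_cluster_scale x A k (x i)"
  by (rule order_trans[OF cluster_scale_nonneg cluster_scale_le_local])

lemma cluster_scale_antimono:
  assumes "finite A" "i \<le> j"
  shows "cluster_scale x A j \<le> cluster_scale x A i"
proof -
  obtain I where I: "I \<subseteq> A" "card I = card A - i" "cluster_scale x A i = diameter (x ` I)"
    using cluster_scale_attained[OF assms(1)] .
  obtain I' where I': "I' \<subseteq> I" "card I' = card A - j"
    using obtain_subset_with_card_n[of "card A - j" I] I(2) assms(2) by (metis diff_le_mono2)
  have "cluster_scale x A j \<le> diameter (x ` I')"
    using cluster_scale_le[OF assms(1) order_trans[OF I'(1) I(1)] I'(2)] .
  also have "\<dots> \<le> diameter (x ` I)"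
    using diameter_image_mono[OF finite_subset[OF I(1) assms(1)] I'(1)] .
  finally show ?thesis using I by simp
qed

definition central_index :: "('i \<Rightarrow> 'a::metric_space) \<Rightarrow> 'i set \<Rightarrow> 'i \<Rightarrow> bool" where
  "central_index x A u \<longleftrightarrow> u \<in> A \<and> (\<forall>j. 2 * j \<le> card A \<longrightarrow>
     (\<exists>J\<subseteq>A. card J = card A - j \<and> u \<in> J \<and> diameter (x ` J) \<le> 2 * cluster_scale x A j))"

lemma central_indexD:
  "central_index x A u \<Longrightarrow> 2 * j \<le> card A \<Longrightarrow>
    \<exists>J\<subseteq>A. card J = card A - j \<and> u \<in> J \<and> diameter (x ` J) \<le> 2 * cluster_scale x A j"
  unfolding central_index_def by blast

text \<open>Any member \<open>u\<close> of an optimal cluster of size \<open>\<lceil>n/2\<rceil>\<close> is central: an optimal cluster of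
  size \<open>n - j \<ge> n/2\<close> meets it, so \<open>u\<close> can be exchanged in at the cost of \<open>L\<^sub>n\<^sub>/\<^sub>2 \<le> L\<^sub>j\<close>.\<close>
lemma central_index_exists:
  assumes A: "finite A" "A \<noteq> {}"
  shows "\<exists>u. central_index x A u"
proof -
  define m where "m = card A div 2"
  obtain Im where Im: "Im \<subseteq> A" "card Im = card A - m" "cluster_scale x A m = diameter (x ` Im)"
    using cluster_scale_attained[OF A(1)] .
  have "0 < card A" using A by (simp add: card_gt_0_iff)
  then have "card A - m \<noteq> 0" unfolding m_def by linarith
  then obtain u where u: "u \<in> Im" using Im(2) by fastforce
  have "\<exists>J\<subseteq>A. card J = card A - j \<and> u \<in> J \<and> diameter (x ` J) \<le> 2 * cluster_scale x A j"
    if j: "2 * j \<le> card A" for j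
  proof -
    obtain Ij where Ij: "Ij \<subseteq> A" "card Ij = card A - j" "cluster_scale x A j = diameter (x ` Ij)"
      using cluster_scale_attained[OF A(1)] .
    have fin: "finite Ij" "finite Im" using Ij(1) Im(1) A(1) finite_subset by auto
    have Lj: "0 \<le> cluster_scale x A j" using cluster_scale_nonneg[OF A(1)] .
    consider "u \<in> Ij" | "j = m" | "u \<notin> Ij" "j < m" using j unfolding m_def by linarith
    then show ?thesis
    proof cases
      case 1
      then show ?thesis using Ij Lj by (intro exI[of _ Ij]) auto
    next
      case 2
      then show ?thesis using Im u Lj by (intro exI[of _ Im]) auto
    next
      case 3
      have "card (Ij \<union> Im) < card Ij + card Im"
        using card_mono[OF A(1), of "Ij \<union> Im"] Ij(1,2) Im(1,2) 3(2) j unfolding m_def by auto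
      then have "Ij \<inter> Im \<noteq> {}" using card_Un_disjoint[OF fin] by fastforce
      moreover have "2 \<le> card Ij" using Ij(2) 3(2) j unfolding m_def by linarith
      ultimately obtain J where J: "J \<subseteq> insert u Ij" "card J = card Ij" "u \<in> J"
        "diameter (x ` J) \<le> diameter (x ` Ij) + diameter (x ` Im)"
        using exchange_into_meeting_subfamily[OF fin(1) _ 3(1) fin(2) u] by blast
      moreover have "diameter (x ` Im) \<le> cluster_scale x A j"
        using Im(3) cluster_scale_antimono[OF A(1), of j m x] 3(2) by simp
      ultimately show ?thesis using Ij u Im(1) by (intro exI[of _ J]) auto
    qed
  qed
  then show ?thesis using u Im(1) unfolding central_index_def by blast
qed

section \<open>Products of distances over disjoint pairs\<close>

lemma finite_max_point:
  fixes g :: "'a \<Rightarrow> 'b::linorder"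
  assumes "finite S" "S \<noteq> {}"
  obtains v where "v \<in> S" "\<And>w. w \<in> S \<Longrightarrow> g w \<le> g v"
proof -
  have "Max (g ` S) \<in> g ` S" using assms by simp
  then obtain v where "v \<in> S" "g v = Max (g ` S)" by (metis imageE)
  then show ?thesis using that assms by (metis Max_ge finite_imageI image_eqI)
qed

lemma prod_le_prod_by_subset_witnesses:
  fixes d :: "'v \<Rightarrow> real" and L :: "nat \<Rightarrow> real"
  assumes "finite V" "\<And>v. v \<in> V \<Longrightarrow> 0 \<le> d v"
    and "\<And>V'. V' \<subseteq> V \<Longrightarrow> V' \<noteq> {} \<Longrightarrow> \<exists>v\<in>V'. d v \<le> L (card V' - 1)"
  shows "(\<Prod>v\<in>V. d v) \<le> (\<Prod>i<card V. L i)"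
  using assms
proof (induction "card V" arbitrary: V)
  case 0
  then show ?case by simp
next
  case (Suc n)
  then obtain v where v: "v \<in> V" "d v \<le> L n"
    using Suc.prems(3)[of V] by (metis card.empty diff_Suc_1 nat.distinct(1) order_refl)
  have IH: "(\<Prod>w\<in>V - {v}. d w) \<le> (\<Prod>i<n. L i)"
  proof -
    have "card (V - {v}) = n" using Suc.hyps(2) Suc.prems(1) v(1) by simp
    moreover have "\<exists>w\<in>V'. d w \<le> L (card V' - 1)" if "V' \<subseteq> V - {v}" "V' \<noteq> {}" for V'
      using Suc.prems(3) that by blast
    ultimately show ?thesis using Suc.hyps(1)[of "V - {v}"] Suc.prems(1,2) by simp
  qed
  have "(\<Prod>w\<in>V. d w) = d v * (\<Prod>w\<in>V - {v}. d w)"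
    using Suc.prems(1) v(1) by (simp add: prod.remove)
  also have "\<dots> \<le> L n * (\<Prod>i<n. L i)"
    using v IH Suc.prems(2) by (intro mult_mono) (auto intro: prod_nonneg order_trans)
  finally show ?case using Suc.hyps(2)[symmetric] by (simp add: mult.commute)
qed

definition pair_prod :: "('i \<Rightarrow> 'a::metric_space) \<Rightarrow> (nat \<Rightarrow> 'i) \<Rightarrow> nat \<Rightarrow> real" where
  "pair_prod x f r = (\<Prod>\<nu><r. dist (x (f \<nu>)) (x (f (r + \<nu>))))"

lemma pair_avoiding_small_set:
  fixes f :: "nat \<Rightarrow> 'i"
  assumes "inj_on f {..<2*r}" "V \<subseteq> {..<r}" "finite E" "card E < card V"
  obtains v where "v \<in> V" "f v \<notin> E" "f (r + v) \<notin> E"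
proof -
  have "\<exists>v\<in>V. f v \<notin> E \<and> f (r + v) \<notin> E"
  proof (rule ccontr)
    assume "\<not> ?thesis"
    then have hit: "f v \<in> E \<or> f (r + v) \<in> E" if "v \<in> V" for v using that by blast
    define idx where "idx v = (if f v \<in> E then v else r + v)" for v
    have "inj_on idx V"
    proof (rule inj_onI)
      fix a b assume "a \<in> V" "b \<in> V" "idx a = idx b"
      then show "a = b" using assms(2) unfolding idx_def by (auto split: if_splits)
    qed
    moreover have "idx ` V \<subseteq> {..<2*r}" using assms(2) by (auto simp: idx_def)
    ultimately have "inj_on (f \<circ> idx) V"
      using assms(1) by (simp add: comp_inj_on inj_on_subset)
    moreover have "(f \<circ> idx) ` V \<subseteq> E" using hit by (force simp: idx_def)
    ultimately have "card V \<le> card E" using card_inj_on_le assms(3) by blast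
    then show False using assms(4) by simp
  qed
  then show ?thesis using that by blast
qed

lemma pair_prod_le_prod_cluster_scales:
  assumes A: "finite A" and f: "inj_on f {..<2*r}" "f ` {..<2*r} \<subseteq> A"
  shows "pair_prod x f r \<le> (\<Prod>i<r. cluster_scale x A i)"
proof -
  have r: "2 * r \<le> card A" using card_inj_on_le[OF f A] by simp
  have "(\<Prod>\<nu>\<in>{..<r}. dist (x (f \<nu>)) (x (f (r + \<nu>)))) \<le> (\<Prod>i<card {..<r}. cluster_scale x A i)"
  proof (rule prod_le_prod_by_subset_witnesses)
    fix V assume V: "V \<subseteq> {..<r}" "V \<noteq> {}"
    then have s: "1 \<le> card V" "card V \<le> r"
      using finite_subset[OF V(1)] card_mono[OF _ V(1)] by (auto simp: Suc_le_eq card_gt_0_iff)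
    obtain I where I: "I \<subseteq> A" "card I = card A - (card V - 1)"
      "cluster_scale x A (card V - 1) = diameter (x ` I)"
      using cluster_scale_attained[OF A] .
    have "card (A - I) < card V"
      using I A s r by (simp add: card_Diff_subset[OF finite_subset[OF I(1) A] I(1)])
    then obtain v where v: "v \<in> V" "f v \<notin> A - I" "f (r + v) \<notin> A - I"
      using pair_avoiding_small_set[OF f(1) V(1)] A by blast
    moreover have "v < r" using v(1) V(1) by auto
    then have "f v \<in> A" "f (r + v) \<in> A" using f(2) by auto
    ultimately have "f v \<in> I" "f (r + v) \<in> I" by auto
    then show "\<exists>v\<in>V. dist (x (f v)) (x (f (r + v))) \<le> cluster_scale x A (card V - 1)"
      using v(1) I(3) dist_le_diameter_image[OF finite_subset[OF I(1) A]] by metis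
  qed auto
  then show ?thesis unfolding pair_prod_def by simp
qed

text \<open>An optimal cluster \<open>T\<close> of \<open>A - {u, v}\<close> is within \<open>2 L\<^sub>i\<^sub>+\<^sub>2(A) \<le> 2 diam T\<close> of \<open>u\<close>:
  either it meets the central cluster around \<open>u\<close>, or together with it it covers \<open>A\<close>, which puts
  the farthest point \<open>v\<close>, and hence all of \<open>T\<close>, that close to \<open>u\<close>.\<close>
lemma cluster_scale_Suc_le_remove_pair:
  assumes A: "finite A" and u: "central_index x A u" and v: "v \<in> A" "u \<noteq> v"
    and far: "\<And>w. w \<in> A \<Longrightarrow> dist (x u) (x w) \<le> dist (x u) (x v)"
    and i: "2 * i + 4 \<le> card A"
  shows "cluster_scale x A (Suc i) \<le> 3 * cluster_scale x (A - {u, v}) i"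
proof -
  have "finite (A - {u, v})" using A by simp
  then obtain T where T: "T \<subseteq> A - {u, v}" "card T = card (A - {u, v}) - i"
    "cluster_scale x (A - {u, v}) i = diameter (x ` T)"
    by (rule cluster_scale_attained)
  have finT: "finite T" using T(1) A finite_subset by blast
  have uv: "u \<in> A" "v \<in> A" using u v unfolding central_index_def by auto
  have cardT: "card T = card A - Suc (Suc i)" using T(2) A uv v(2) by (simp add: card_Diff_subset)
  then have "T \<noteq> {}" using i by auto
  have L2: "cluster_scale x A (Suc (Suc i)) \<le> diameter (x ` T)"
    using cluster_scale_le[OF A _ cardT] T(1) by blast
  obtain J where J: "J \<subseteq> A" "card J = card A - Suc (Suc i)" "u \<in> J"
    "diameter (x ` J) \<le> 2 * cluster_scale x A (Suc (Suc i))"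
    using central_indexD[OF u, of "Suc (Suc i)"] i by auto
  have finJ: "finite J" using J(1) A finite_subset by blast
  have "\<exists>t\<in>T. dist (x u) (x t) \<le> diameter (x ` J)"
  proof (cases "T \<inter> J = {}")
    case False
    then show ?thesis using dist_le_diameter_image[OF finJ J(3)] by blast
  next
    case True
    have "card A \<le> card (T \<union> J)"
      using card_Un_disjoint[OF finT finJ True] cardT J(2) i by simp
    then have "T \<union> J = A" using card_seteq[OF A] T(1) J(1) by blast
    then have "v \<in> J" using T(1) uv by auto
    then show ?thesis
      using \<open>T \<noteq> {}\<close> far T(1) dist_le_diameter_image[OF finJ J(3), of v x] by force
  qed
  then obtain t where t: "t \<in> T" "dist (x u) (x t) \<le> 2 * diameter (x ` T)"
    using J(4) L2 by fastforce
  have "u \<notin> T" using T(1) by blast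
  then have "card (insert u T) = card A - Suc i" using cardT finT i by simp
  then have "cluster_scale x A (Suc i) \<le> diameter (x ` insert u T)"
    using cluster_scale_le[OF A] T(1) uv(1) by blast
  also have "\<dots> \<le> diameter (x ` T) + dist (x u) (x t)"
    unfolding image_insert using t(1) finT by (intro diameter_insert_le) auto
  finally show ?thesis using t(2) T(3) by linarith
qed

lemma pair_prod_extend:
  fixes f :: "nat \<Rightarrow> 'i"
  assumes f: "inj_on f {..<2*r}" "f ` {..<2*r} \<subseteq> B" and uv: "u \<notin> B" "v \<notin> B" "u \<noteq> v"
  obtains g where "inj_on g {..<2 * Suc r}" "g ` {..<2 * Suc r} \<subseteq> insert u (insert v B)"
    "pair_prod x g (Suc r) = pair_prod x f r * dist (x u) (x v)"
proof
  define s where "s k = (if k < r then k else k - 1)" for k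
  define g where "g k = (if k = r then u else if k = Suc (2 * r) then v else f (s k))" for k
  have s: "s k < 2 * r" if "k < 2 * Suc r" "k \<noteq> r" "k \<noteq> Suc (2 * r)" for k
    using that unfolding s_def by auto
  have g_in: "g k \<in> B" if "k < 2 * Suc r" "k \<noteq> r" "k \<noteq> Suc (2 * r)" for k
    using that s f(2) unfolding g_def by auto
  show "inj_on g {..<2 * Suc r}"
  proof (rule inj_onI)
    fix k l assume kl: "k \<in> {..<2 * Suc r}" "l \<in> {..<2 * Suc r}" "g k = g l"
    consider "k = r \<or> k = Suc (2 * r)" | "l = r \<or> l = Suc (2 * r)"
      | "k \<noteq> r" "k \<noteq> Suc (2 * r)" "l \<noteq> r" "l \<noteq> Suc (2 * r)" by blast
    then show "k = l"
    proof cases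
      case 1
      then show ?thesis using kl g_in[of l] uv unfolding g_def by (auto split: if_splits)
    next
      case 2
      then show ?thesis using kl g_in[of k] uv unfolding g_def by (auto split: if_splits)
    next
      case 3
      then have "s k = s l" using kl s inj_onD[OF f(1)] unfolding g_def by auto
      then show ?thesis using 3 unfolding s_def by (auto split: if_splits)
    qed
  qed
  show "g ` {..<2 * Suc r} \<subseteq> insert u (insert v B)"
    using g_in unfolding g_def by fastforce
  have "pair_prod x g (Suc r) = (\<Prod>\<nu><r. dist (x (g \<nu>)) (x (g (Suc r + \<nu>)))) * dist (x u) (x v)"
    unfolding pair_prod_def g_def by simp
  also have "\<dots> = pair_prod x f r * dist (x u) (x v)"
    unfolding pair_prod_def g_def s_def by (auto intro!: prod.cong)
  finally show "pair_prod x g (Suc r) = pair_prod x f r * dist (x u) (x v)" .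
qed

lemma central_farthest_pair:
  fixes x :: "'i \<Rightarrow> 'a::metric_space"
  assumes A: "finite A" "2 \<le> card A"
  obtains u v where "u \<in> A" "v \<in> A" "u \<noteq> v" "cluster_scale x A 0 \<le> 2 * dist (x u) (x v)"
    "\<And>i. 2 * i + 4 \<le> card A \<Longrightarrow> cluster_scale x A (Suc i) \<le> 3 * cluster_scale x (A - {u, v}) i"
proof -
  have "A \<noteq> {}" using A(2) by auto
  then obtain u where central: "central_index x A u" using central_index_exists[OF A(1)] by blast
  then have u: "u \<in> A" unfolding central_index_def by blast
  have "card (A - {u}) \<noteq> 0" using A u by (simp add: card_Diff_singleton)
  then have "A - {u} \<noteq> {}" by (metis card.empty)
  then obtain v where v: "v \<in> A - {u}"
    and far': "\<And>w. w \<in> A - {u} \<Longrightarrow> dist (x u) (x w) \<le> dist (x u) (x v)"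
    using finite_max_point[of "A - {u}" "\<lambda>w. dist (x u) (x w)"] A(1) by blast
  have far: "dist (x u) (x w) \<le> dist (x u) (x v)" if "w \<in> A" for w
    using far'[of w] that by (cases "w = u") auto
  have "cluster_scale x A 0 \<le> diameter (x ` A)" using cluster_scale_le[OF A(1) order_refl, of 0]
    by simp
  also have "\<dots> \<le> 2 * dist (x u) (x v)"
    using \<open>A \<noteq> {}\<close> far by (intro diameter_le_twice_radius) (auto simp: dist_commute)
  finally show ?thesis
    using that[of u v] u v far cluster_scale_Suc_le_remove_pair[OF A(1) central, of v] by blast
qed

text \<open>Induction on \<open>r\<close>: pair the central point \<open>u\<close> with the point \<open>v\<close> farthest from it and recurse
  into \<open>A - {u, v}\<close>.\<close>
lemma pair_prod_lower_bound:
  assumes "finite A" "2 * r \<le> card A"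
  obtains f where "inj_on f {..<2*r}" "f ` {..<2*r} \<subseteq> A"
    "(\<Prod>i<r. cluster_scale x A i) \<le> 2 ^ (r * r) * pair_prod x f r"
  using assms
proof (induction r arbitrary: A thesis)
  case 0
  show ?case by (rule 0(1)[of "\<lambda>_. undefined"]) (simp_all add: pair_prod_def)
next
  case (Suc r)
  note A = Suc.prems(2)
  obtain u v where uv: "u \<in> A" "v \<in> A" "u \<noteq> v" and L0: "cluster_scale x A 0 \<le> 2 * dist (x u) (x v)"
    and step: "\<And>i. 2 * i + 4 \<le> card A \<Longrightarrow> cluster_scale x A (Suc i) \<le> 3 * cluster_scale x (A - {u, v}) i"
    using central_farthest_pair[OF A, of x] Suc.prems(3) by auto
  define B where "B = A - {u, v}"
  have B: "finite B" "2 * r \<le> card B"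
    using A uv Suc.prems(3) unfolding B_def by (auto simp: card_Diff_subset)
  obtain f' where f': "inj_on f' {..<2*r}" "f' ` {..<2*r} \<subseteq> B"
    "(\<Prod>i<r. cluster_scale x B i) \<le> 2 ^ (r * r) * pair_prod x f' r"
    using Suc.IH[OF _ B] by blast
  obtain f where f: "inj_on f {..<2 * Suc r}" "f ` {..<2 * Suc r} \<subseteq> insert u (insert v B)"
    "pair_prod x f (Suc r) = pair_prod x f' r * dist (x u) (x v)"
    using pair_prod_extend[OF f'(1,2)] uv unfolding B_def by blast
  have "(\<Prod>i<r. cluster_scale x A (Suc i)) \<le> (\<Prod>i<r. 4 * cluster_scale x B i)"
  proof (rule prod_mono)
    fix i assume "i \<in> {..<r}"
    then have "cluster_scale x A (Suc i) \<le> 3 * cluster_scale x B i"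
      unfolding B_def using Suc.prems(3) by (intro step) auto
    then show "0 \<le> cluster_scale x A (Suc i) \<and> cluster_scale x A (Suc i) \<le> 4 * cluster_scale x B i"
      using cluster_scale_nonneg[OF A] cluster_scale_nonneg[OF B(1), of x i] by auto
  qed
  also have "\<dots> \<le> 4 ^ r * (2 ^ (r * r) * pair_prod x f' r)"
    using f'(3) by (simp add: prod.distrib)
  finally have tail: "(\<Prod>i<r. cluster_scale x A (Suc i)) \<le> 4 ^ r * (2 ^ (r * r) * pair_prod x f' r)" .
  have "(\<Prod>i<Suc r. cluster_scale x A i) = cluster_scale x A 0 * (\<Prod>i<r. cluster_scale x A (Suc i))"
    by (simp only: prod.lessThan_Suc_shift)
  also have "\<dots> \<le> (2 * dist (x u) (x v)) * (4 ^ r * (2 ^ (r * r) * pair_prod x f' r))"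
    using L0 tail cluster_scale_nonneg[OF A] by (intro mult_mono) (auto intro: prod_nonneg)
  also have "\<dots> = 2 ^ (Suc r * Suc r) * pair_prod x f (Suc r)"
  proof -
    have "(2::real) ^ (Suc r * Suc r) = 2 * 4 ^ r * 2 ^ (r * r)"
      by (simp add: power_add power_mult_distrib[symmetric])
    then show ?thesis unfolding f(3) by (simp add: algebra_simps)
  qed
  finally show ?case
    using Suc.prems(1) f(1,2) uv unfolding B_def by blast
qed

section \<open>Products of distances to a point\<close>

lemma exchange_in_point:
  assumes "finite S" "S \<noteq> {}"
  obtains J where "J \<subseteq> insert a S" "card J = card S" "a \<in> J"
proof (cases "a \<in> S")
  case True
  then show ?thesis using that[of S] by blast
next
  case False
  obtain s where s: "s \<in> S" using assms(2) by blast
  moreover have "0 < card S" using assms by (simp add: card_gt_0_iff)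
  ultimately have "card (insert a (S - {s})) = card S"
    using False assms(1) by (simp add: card_Diff_singleton)
  then show ?thesis using that[of "insert a (S - {s})"] by blast
qed

lemma farthest_first_enumeration:
  fixes d :: "'i \<Rightarrow> 'b::linorder"
  assumes "finite A" "K \<le> card A"
  obtains f where "inj_on f {..<K}" "f ` {..<K} \<subseteq> A"
    "\<And>i w. i < K \<Longrightarrow> w \<in> A - f ` {..<i} \<Longrightarrow> d w \<le> d (f i)"
  using assms(2)
proof (induction K arbitrary: thesis)
  case 0
  show ?case by (rule 0(1)[of "\<lambda>_. undefined"]) auto
next
  case (Suc K)
  obtain f where f: "inj_on f {..<K}" "f ` {..<K} \<subseteq> A"
    "\<And>i w. i < K \<Longrightarrow> w \<in> A - f ` {..<i} \<Longrightarrow> d w \<le> d (f i)"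
  proof -
    have "K \<le> card A" using Suc.prems(2) by simp
    then show ?thesis using that by (rule Suc.IH[rotated])
  qed
  have "card (f ` {..<K}) = K" using card_image[OF f(1)] by simp
  then have "A - f ` {..<K} \<noteq> {}"
    using Suc.prems(2) card_mono[of "f ` {..<K}" A] by auto
  then obtain j where j: "j \<in> A - f ` {..<K}" "\<And>w. w \<in> A - f ` {..<K} \<Longrightarrow> d w \<le> d j"
    using finite_max_point[of "A - f ` {..<K}" d] assms(1) by blast
  let ?g = "f(K := j)"
  have "inj_on ?g {..<Suc K}" using f(1) j(1) by (auto simp: lessThan_Suc inj_on_def)
  moreover have "?g ` {..<Suc K} \<subseteq> A" using f(2) j(1) by (auto simp: lessThan_Suc)
  moreover have "d w \<le> d (?g i)" if "i < Suc K" "w \<in> A - ?g ` {..<i}" for i w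
  proof (cases "i = K")
    case True
    then have "?g ` {..<i} = f ` {..<K}" by auto
    then show ?thesis using that j(2) True by simp
  next
    case False
    then have "?g ` {..<i} = f ` {..<i}" "?g i = f i" using that(1) by auto
    then show ?thesis using that False f(3)[of i w] by simp
  qed
  ultimately show ?case using Suc.prems(1) by blast
qed

lemma tuple_dist_prod_le_prod_local_cluster_scales:
  assumes A: "finite A" "i0 \<in> A" "K < card A" and f: "inj_on f {..<K}" "f ` {..<K} \<subseteq> A"
  shows "(\<Prod>t<K. dist (x (f t)) (x i0)) \<le> (\<Prod>i<K. local_cluster_scale x A i (x i0))"
proof -
  have "(\<Prod>t\<in>{..<K}. dist (x (f t)) (x i0)) \<le> (\<Prod>i<card {..<K}. local_cluster_scale x A i (x i0))"
  proof (rule prod_le_prod_by_subset_witnesses)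
    fix V assume V: "V \<subseteq> {..<K}" "V \<noteq> {}"
    then have s: "1 \<le> card V" "card V \<le> K"
      using finite_subset[OF V(1)] card_mono[OF _ V(1)] by (auto simp: Suc_le_eq card_gt_0_iff)
    have "card V - 1 < card A" using s A(3) by linarith
    then obtain I where I: "I \<subseteq> A" "card I = card A - (card V - 1)" "x i0 \<in> x ` I"
      "local_cluster_scale x A (card V - 1) (x i0) = diameter (x ` I)"
      by (rule local_cluster_scale_attained[OF A(1,2)])
    have "card (A - I) = card A - card I"
      by (rule card_Diff_subset[OF finite_subset[OF I(1) A(1)] I(1)])
    then have "card (A - I) < card V" using I(2) s A(3) by linarith
    moreover have "card V \<le> card (A - I)" if "f ` V \<subseteq> A - I"
      using card_inj_on_le[OF inj_on_subset[OF f(1) V(1)] that] A(1) by simp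
    ultimately have "\<not> f ` V \<subseteq> A - I" by linarith
    then obtain t where t: "t \<in> V" "f t \<in> I" using V(1) f(2) by blast
    obtain i1 where "i1 \<in> I" "x i1 = x i0" using I(3) by auto
    then show "\<exists>t\<in>V. dist (x (f t)) (x i0) \<le> local_cluster_scale x A (card V - 1) (x i0)"
      using t I(4) dist_le_diameter_image[OF finite_subset[OF I(1) A(1)] t(2)] by metis
  qed auto
  then show ?thesis by simp
qed

text \<open>Enumerate farthest-first from \<open>x i0\<close>: after removing the first \<open>i\<close> points, all remaining
  ones (and \<open>i0\<close>) lie within \<open>dist (x (f i)) (x i0)\<close> of \<open>x i0\<close>.\<close>
lemma prod_local_cluster_scales_le_tuple_dist_prod:
  assumes A: "finite A" "i0 \<in> A" "K < card A"
  obtains f where "inj_on f {..<K}" "f ` {..<K} \<subseteq> A"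
    "(\<Prod>i<K. local_cluster_scale x A i (x i0)) \<le> 2 ^ K * (\<Prod>t<K. dist (x (f t)) (x i0))"
proof -
  let ?d = "\<lambda>w. dist (x w) (x i0)"
  obtain f where f: "inj_on f {..<K}" "f ` {..<K} \<subseteq> A"
    "\<And>i w. i < K \<Longrightarrow> w \<in> A - f ` {..<i} \<Longrightarrow> ?d w \<le> ?d (f i)"
    using farthest_first_enumeration[OF A(1), of K ?d] A(3) by auto
  have "local_cluster_scale x A i (x i0) \<le> 2 * ?d (f i)" if i: "i < K" for i
  proof -
    have fin: "finite (A - f ` {..<i})" using A(1) by simp
    have "card (f ` {..<i}) = i" using card_image[OF inj_on_subset[OF f(1), of "{..<i}"]] i by simp
    moreover have "f ` {..<i} \<subseteq> A" using f(2) i by auto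
    ultimately have card: "card (A - f ` {..<i}) = card A - i"
      using card_Diff_subset[of "f ` {..<i}" A] by simp
    moreover have "A - f ` {..<i} \<noteq> {}" using card i A(3) card_gt_0_iff[of "A - f ` {..<i}"] by simp
    ultimately obtain J where J: "J \<subseteq> insert i0 (A - f ` {..<i})" "card J = card A - i" "i0 \<in> J"
      using exchange_in_point[OF fin, of i0] by metis
    have "local_cluster_scale x A i (x i0) \<le> diameter (x ` J)"
      using local_cluster_scale_le[OF A(1) _ J(2,3)] J(1) A(2) by blast
    also have "\<dots> \<le> 2 * ?d (f i)"
    proof (rule diameter_le_twice_radius[where c = "x i0"])
      show "x ` J \<noteq> {}" using J(3) by blast
    next
      fix y assume "y \<in> x ` J"
      then obtain w where "w \<in> J" "y = x w" by blast
      then show "dist y (x i0) \<le> ?d (f i)" using J(1) f(3)[OF i, of w] by (cases "w = i0") auto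
    qed
    finally show ?thesis .
  qed
  then have "(\<Prod>i<K. local_cluster_scale x A i (x i0)) \<le> (\<Prod>i<K. 2 * ?d (f i))"
    using local_cluster_scale_nonneg[OF A(1,2), of _ x] A(3) by (intro prod_mono) auto
  also have "\<dots> = 2 ^ K * (\<Prod>t<K. ?d (f t))" by (simp add: prod.distrib)
  finally show ?thesis using that f(1,2) by blast
qed

section \<open>Integer polynomial functions\<close>

inductive int_poly_fun :: "nat \<Rightarrow> ((nat \<Rightarrow> 'a::comm_ring_1) \<Rightarrow> 'a) \<Rightarrow> bool" for n where
  int_poly_fun_const: "int_poly_fun n (\<lambda>v. of_int c)"
| int_poly_fun_var: "j < n \<Longrightarrow> int_poly_fun n (\<lambda>v. v j)"
| int_poly_fun_add: "int_poly_fun n P \<Longrightarrow> int_poly_fun n Q \<Longrightarrow> int_poly_fun n (\<lambda>v. P v + Q v)"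
| int_poly_fun_mult: "int_poly_fun n P \<Longrightarrow> int_poly_fun n Q \<Longrightarrow> int_poly_fun n (\<lambda>v. P v * Q v)"

lemma int_poly_fun_compose:
  "int_poly_fun m G \<Longrightarrow> (\<And>j. j < m \<Longrightarrow> int_poly_fun n (H j)) \<Longrightarrow> int_poly_fun n (\<lambda>v. G (\<lambda>j. H j v))"
  by (induction rule: int_poly_fun.induct) (auto intro: int_poly_fun.intros)

lemma int_poly_fun_mono: "int_poly_fun m P \<Longrightarrow> m \<le> n \<Longrightarrow> int_poly_fun n P"
  by (induction rule: int_poly_fun.induct) (auto intro: int_poly_fun.intros)

lemma int_poly_fun_cong_vars:
  "int_poly_fun n P \<Longrightarrow> (\<And>j. j < n \<Longrightarrow> v j = w j) \<Longrightarrow> P v = P w"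
  by (induction rule: int_poly_fun.induct) auto

definition int_poly_of :: "nat \<Rightarrow> ('z \<Rightarrow> nat \<Rightarrow> 'a::comm_ring_1) \<Rightarrow> 'z set \<Rightarrow> ('z \<Rightarrow> 'a) \<Rightarrow> bool" where
  "int_poly_of n v D f \<longleftrightarrow> (\<exists>F. int_poly_fun n F \<and> (\<forall>z\<in>D. f z = F (v z)))"

lemma int_poly_fun_iff_int_poly_of: "int_poly_fun n g \<longleftrightarrow> int_poly_of n (\<lambda>w. w) UNIV g"
  unfolding int_poly_of_def by (metis UNIV_I ext)

lemma int_poly_of_mono: "int_poly_of m v D f \<Longrightarrow> m \<le> n \<Longrightarrow> int_poly_of n v D f"
  unfolding int_poly_of_def using int_poly_fun_mono by blast

lemma int_poly_of_const: "int_poly_of n v D (\<lambda>z. of_int c)"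
  unfolding int_poly_of_def by (blast intro: int_poly_fun_const)

lemma int_poly_of_of_nat: "int_poly_of n v D (\<lambda>z. of_nat k)"
  using int_poly_of_const[of n v D "int k"] by simp

lemma int_poly_of_var: "j < n \<Longrightarrow> int_poly_of n v D (\<lambda>z. v z j)"
  unfolding int_poly_of_def by (blast intro: int_poly_fun_var)

lemma int_poly_of_add:
  assumes "int_poly_of n v D f" "int_poly_of n v D g"
  shows "int_poly_of n v D (\<lambda>z. f z + g z)"
proof -
  obtain F G where "int_poly_fun n F" "int_poly_fun n G" "\<forall>z\<in>D. f z = F (v z)" "\<forall>z\<in>D. g z = G (v z)"
    using assms unfolding int_poly_of_def by blast
  then show ?thesis unfolding int_poly_of_def
    by (auto intro!: exI[of _ "\<lambda>w. F w + G w"] int_poly_fun_add)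
qed

lemma int_poly_of_mult:
  assumes "int_poly_of n v D f" "int_poly_of n v D g"
  shows "int_poly_of n v D (\<lambda>z. f z * g z)"
proof -
  obtain F G where "int_poly_fun n F" "int_poly_fun n G" "\<forall>z\<in>D. f z = F (v z)" "\<forall>z\<in>D. g z = G (v z)"
    using assms unfolding int_poly_of_def by blast
  then show ?thesis unfolding int_poly_of_def
    by (auto intro!: exI[of _ "\<lambda>w. F w * G w"] int_poly_fun_mult)
qed

lemma int_poly_of_uminus: "int_poly_of n v D f \<Longrightarrow> int_poly_of n v D (\<lambda>z. - f z)"
  using int_poly_of_mult[OF int_poly_of_const[of n v D "-1"]] by simp

lemma int_poly_of_diff:
  "int_poly_of n v D f \<Longrightarrow> int_poly_of n v D g \<Longrightarrow> int_poly_of n v D (\<lambda>z. f z - g z)"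
  using int_poly_of_add[OF _ int_poly_of_uminus] by simp

lemma int_poly_of_power: "int_poly_of n v D f \<Longrightarrow> int_poly_of n v D (\<lambda>z. f z ^ k)"
  using int_poly_of_const[of n v D 1] by (induction k) (auto intro: int_poly_of_mult)

lemma int_poly_of_sum:
  "(\<And>i. i \<in> S \<Longrightarrow> int_poly_of n v D (f i)) \<Longrightarrow> int_poly_of n v D (\<lambda>z. \<Sum>i\<in>S. f i z)"
  using int_poly_of_const[of n v D 0]
  by (induction S rule: infinite_finite_induct) (auto intro: int_poly_of_add)

lemma int_poly_of_prod:
  "(\<And>i. i \<in> S \<Longrightarrow> int_poly_of n v D (f i)) \<Longrightarrow> int_poly_of n v D (\<lambda>z. \<Prod>i\<in>S. f i z)"
  using int_poly_of_const[of n v D 1]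
  by (induction S rule: infinite_finite_induct) (auto intro: int_poly_of_mult)

lemma int_poly_of_cong:
  "int_poly_of n v D f \<Longrightarrow> (\<And>z. z \<in> D \<Longrightarrow> f z = g z) \<Longrightarrow> int_poly_of n v D g"
  unfolding int_poly_of_def by auto

lemma int_poly_of_compose:
  assumes f: "int_poly_of m w E f" and h: "h ` D \<subseteq> E"
    and w: "\<And>j. j < m \<Longrightarrow> int_poly_of n v D (\<lambda>z. w (h z) j)"
  shows "int_poly_of n v D (\<lambda>z. f (h z))"
proof -
  obtain G where G: "int_poly_fun m G" "\<forall>y\<in>E. f y = G (w y)" using f unfolding int_poly_of_def
    by blast
  have "\<forall>j. \<exists>H. j < m \<longrightarrow> int_poly_fun n H \<and> (\<forall>z\<in>D. w (h z) j = H (v z))"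
    using w unfolding int_poly_of_def by blast
  then obtain H where H: "\<And>j. j < m \<Longrightarrow> int_poly_fun n (H j) \<and> (\<forall>z\<in>D. w (h z) j = H j (v z))"
    by metis
  have "int_poly_fun n (\<lambda>u. G (\<lambda>j. H j u))" using int_poly_fun_compose[OF G(1)] H by blast
  moreover have "f (h z) = G (\<lambda>j. H j (v z))" if "z \<in> D" for z
  proof -
    have "f (h z) = G (w (h z))" using G(2) h that by blast
    also have "\<dots> = G (\<lambda>j. H j (v z))"
      by (rule int_poly_fun_cong_vars[OF G(1)]) (use H that in blast)
    finally show ?thesis .
  qed
  ultimately show ?thesis unfolding int_poly_of_def by blast
qed

definition monom_eval :: "(nat \<Rightarrow> complex) \<Rightarrow> nat list \<Rightarrow> complex" where
  "monom_eval v e = (\<Prod>j<length e. v j ^ (e ! j))"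

lemma monom_eval_nth_default:
  assumes "length e \<le> K"
  shows "monom_eval v e = (\<Prod>j<K. v j ^ nth_default 0 e j)"
proof -
  have "(\<Prod>j<K. v j ^ nth_default 0 e j) = (\<Prod>j<length e. v j ^ nth_default 0 e j)"
    by (rule prod.mono_neutral_right) (use assms in \<open>auto simp: nth_default_def\<close>)
  then show ?thesis unfolding monom_eval_def by (simp add: nth_default_nth)
qed

lemma mpoly_eval_Nil [simp]: "mpoly_eval [] v = 0"
  unfolding mpoly_eval_def by simp

lemma mpoly_eval_Cons [simp]: "mpoly_eval ((c, e) # p) v = of_int c * monom_eval v e + mpoly_eval p v"
  unfolding mpoly_eval_def monom_eval_def by simp

lemma mpoly_eval_append [simp]: "mpoly_eval (p @ q) v = mpoly_eval p v + mpoly_eval q v"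
  unfolding mpoly_eval_def by simp

lemma mpoly_vars_append [simp]: "mpoly_vars n (p @ q) \<longleftrightarrow> mpoly_vars n p \<and> mpoly_vars n q"
  unfolding mpoly_vars_def by auto

definition exps_add :: "nat list \<Rightarrow> nat list \<Rightarrow> nat list" where
  "exps_add e1 e2 = map (\<lambda>l. nth_default 0 e1 l + nth_default 0 e2 l) [0..<max (length e1) (length e2)]"

lemma monom_eval_exps_add: "monom_eval v (exps_add e1 e2) = monom_eval v e1 * monom_eval v e2"
proof -
  let ?K = "max (length e1) (length e2)"
  have "monom_eval v (exps_add e1 e2) = (\<Prod>j<?K. v j ^ nth_default 0 e1 j * v j ^ nth_default 0 e2 j)"
    unfolding monom_eval_def exps_add_def by (simp add: power_add)
  then show ?thesis
    by (simp add: prod.distrib monom_eval_nth_default[of e1 ?K] monom_eval_nth_default[of e2 ?K])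
qed

definition mpoly_mult :: "int_mpoly \<Rightarrow> int_mpoly \<Rightarrow> int_mpoly" where
  "mpoly_mult p q = concat (map (\<lambda>(c1, e1). map (\<lambda>(c2, e2). (c1 * c2, exps_add e1 e2)) q) p)"

lemma mpoly_eval_mult: "mpoly_eval (mpoly_mult p q) v = mpoly_eval p v * mpoly_eval q v"
proof (induction p)
  case (Cons m p)
  have "mpoly_eval (map (\<lambda>(c2, e2). (c1 * c2, exps_add e1 e2)) q) v
      = of_int c1 * monom_eval v e1 * mpoly_eval q v" for c1 e1
    by (induction q) (auto simp: monom_eval_exps_add algebra_simps)
  with Cons show ?case by (cases m) (simp add: mpoly_mult_def algebra_simps)
qed (simp add: mpoly_mult_def)

lemma mpoly_vars_mult: "mpoly_vars n p \<Longrightarrow> mpoly_vars n q \<Longrightarrow> mpoly_vars n (mpoly_mult p q)"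
  unfolding mpoly_vars_def mpoly_mult_def exps_add_def by fastforce

lemma int_poly_fun_mpoly:
  "int_poly_fun n P \<Longrightarrow> \<exists>p. mpoly_vars n p \<and> (\<forall>v. P v = mpoly_eval p v)"
proof (induction rule: int_poly_fun.induct)
  case (int_poly_fun_const c)
  show ?case by (rule exI[of _ "[(c, [])]"]) (simp add: mpoly_vars_def monom_eval_def)
next
  case (int_poly_fun_var j)
  have "monom_eval v (replicate j 0 @ [1]) = v j" for v
    unfolding monom_eval_def by (simp add: nth_append)
  then show ?case using int_poly_fun_var
    by (intro exI[of _ "[(1, replicate j 0 @ [1])]"]) (simp add: mpoly_vars_def)
next
  case (int_poly_fun_add P Q)
  then obtain p q where "mpoly_vars n p" "\<forall>v. P v = mpoly_eval p v"
    "mpoly_vars n q" "\<forall>v. Q v = mpoly_eval q v"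
    by blast
  then show ?case by (intro exI[of _ "p @ q"]) simp
next
  case (int_poly_fun_mult P Q)
  then obtain p q where "mpoly_vars n p" "\<forall>v. P v = mpoly_eval p v"
    "mpoly_vars n q" "\<forall>v. Q v = mpoly_eval q v"
    by blast
  then show ?case by (intro exI[of _ "mpoly_mult p q"]) (simp add: mpoly_vars_mult mpoly_eval_mult)
qed

lemma int_poly_of_mpoly:
  "int_poly_of n v D f \<Longrightarrow> \<exists>p. mpoly_vars n p \<and> (\<forall>z\<in>D. f z = mpoly_eval p (v z))"
  unfolding int_poly_of_def using int_poly_fun_mpoly by metis

section \<open>Power sums and elementary symmetric functions\<close>

definition psum :: "nat \<Rightarrow> 'a::comm_ring_1 list \<Rightarrow> 'a" where
  "psum m xs = (\<Sum>x\<leftarrow>xs. x ^ m)"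

lemma psum_Nil [simp]: "psum m [] = 0"
  unfolding psum_def by simp

lemma psum_Cons [simp]: "psum m (y # ys) = y ^ m + psum m ys"
  unfolding psum_def by simp

lemma psum_0: "psum 0 xs = of_nat (length xs)"
  by (induction xs) auto

text \<open>\<open>sym_coeff xs i = (-1)\<^sup>i e\<^sub>i(xs)\<close>, the coefficient of \<open>z\<^sup>n\<^sup>-\<^sup>i\<close> in \<open>\<Prod>x\<leftarrow>xs. z - x\<close>; unlike
  \<open>acoeff\<close> it vanishes for \<open>i > length xs\<close>.\<close>
fun sym_coeff :: "'a::comm_ring_1 list \<Rightarrow> nat \<Rightarrow> 'a" where
  "sym_coeff [] i = (if i = 0 then 1 else 0)"
| "sym_coeff (y # ys) 0 = 1"
| "sym_coeff (y # ys) (Suc i) = sym_coeff ys (Suc i) - y * sym_coeff ys i"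

lemma sym_coeff_0 [simp]: "sym_coeff xs 0 = 1"
  by (cases xs) auto

lemma sym_coeff_beyond: "length xs < i \<Longrightarrow> sym_coeff xs i = 0"
proof (induction xs arbitrary: i)
  case (Cons y ys)
  then show ?case by (cases i) auto
qed simp

lemma sum_sym_coeff_Cons_shift:
  "(\<Sum>i<Suc k. sym_coeff (y # ys) i * q (Suc k - i)) =
     (\<Sum>i<Suc k. sym_coeff ys i * q (Suc k - i)) - y * (\<Sum>i<k. sym_coeff ys i * q (k - i))"
proof -
  have "(\<Sum>i<Suc k. sym_coeff (y # ys) i * q (Suc k - i))
      = q (Suc k) + (\<Sum>i<k. (sym_coeff ys (Suc i) - y * sym_coeff ys i) * q (k - i))"
    by (simp only: sum.lessThan_Suc_shift) simp
  also have "\<dots> = (q (Suc k) + (\<Sum>i<k. sym_coeff ys (Suc i) * q (k - i)))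
      - y * (\<Sum>i<k. sym_coeff ys i * q (k - i))"
    by (simp add: algebra_simps sum_subtractf sum_distrib_left)
  also have "q (Suc k) + (\<Sum>i<k. sym_coeff ys (Suc i) * q (k - i))
      = (\<Sum>i<Suc k. sym_coeff ys i * q (Suc k - i))"
    by (simp only: sum.lessThan_Suc_shift) simp
  finally show ?thesis .
qed

lemma sum_sym_coeff_Cons_power:
  "(\<Sum>i<Suc k. sym_coeff (y # ys) i * y ^ (Suc k - i)) = y * sym_coeff ys k"
proof (induction k)
  case (Suc k)
  have "(\<Sum>i<Suc k. sym_coeff (y # ys) i * y ^ (Suc (Suc k) - i))
      = y * (\<Sum>i<Suc k. sym_coeff (y # ys) i * y ^ (Suc k - i))"
    unfolding sum_distrib_left by (rule sum.cong) (auto simp: Suc_diff_le)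
  then have "(\<Sum>i<Suc (Suc k). sym_coeff (y # ys) i * y ^ (Suc (Suc k) - i))
      = y * (y * sym_coeff ys k) + sym_coeff (y # ys) (Suc k) * y"
    using Suc by (simp only: sum.lessThan_Suc) simp
  then show ?case by (simp add: algebra_simps)
qed simp

theorem newton_identity:
  "(\<Sum>i<m. sym_coeff xs i * psum (m - i) xs) + of_nat m * sym_coeff xs m = 0"
proof (induction xs arbitrary: m)
  case Nil
  then show ?case by (cases m) auto
next
  case (Cons y ys)
  show ?case
  proof (cases m)
    case (Suc k)
    have IH: "(\<Sum>i<j. sym_coeff ys i * psum (j - i) ys) = - (of_nat j * sym_coeff ys j)" for j
      using Cons.IH[of j] by (simp add: eq_neg_iff_add_eq_0)
    have "(\<Sum>i<Suc k. sym_coeff (y # ys) i * psum (Suc k - i) (y # ys))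
       = (\<Sum>i<Suc k. sym_coeff (y # ys) i * psum (Suc k - i) ys)
         + (\<Sum>i<Suc k. sym_coeff (y # ys) i * y ^ (Suc k - i))"
      by (simp add: algebra_simps sum.distrib)
    also have "\<dots> = - (of_nat (Suc k) * sym_coeff ys (Suc k)) + y * (of_nat k * sym_coeff ys k)
         + y * sym_coeff ys k"
      unfolding sum_sym_coeff_Cons_shift[where q = "\<lambda>j. psum j ys"] sum_sym_coeff_Cons_power IH
      by simp
    finally show ?thesis using Suc by (simp add: algebra_simps)
  qed simp
qed

corollary newton_identity_Suc:
  "of_nat (Suc k) * sym_coeff xs (Suc k) = - (\<Sum>i<Suc k. sym_coeff xs i * psum (Suc k - i) xs)"
  using newton_identity[of xs "Suc k"] by (simp only: add_eq_0_iff)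

corollary psum_Suc_newton:
  "psum (Suc k) xs = - (\<Sum>i<k. sym_coeff xs (Suc i) * psum (k - i) xs)
     - of_nat (Suc k) * sym_coeff xs (Suc k)"
proof -
  have newton: "of_nat (Suc k) * sym_coeff xs (Suc k)
      = - (psum (Suc k) xs + (\<Sum>i<k. sym_coeff xs (Suc i) * psum (k - i) xs))"
    using newton_identity_Suc[of k xs] by (simp only: sum.lessThan_Suc_shift) simp
  show ?thesis unfolding newton by (simp add: algebra_simps)
qed

corollary fact_sym_coeff_Suc_newton:
  "of_nat (fact (Suc k)) * sym_coeff xs (Suc k) = - (\<Sum>i<Suc k. of_nat (fact k div fact i)
     * (of_nat (fact i) * sym_coeff xs i) * psum (Suc k - i) xs)"
proof -
  have "of_nat (fact k :: nat) = (of_nat (fact k div fact i) * of_nat (fact i) :: 'a)" if "i < Suc k" for i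
    using that by (metis dvd_div_mult_self fact_dvd less_Suc_eq_le of_nat_mult)
  then have "of_nat (fact k) * (\<Sum>i<Suc k. sym_coeff xs i * psum (Suc k - i) xs) =
      (\<Sum>i<Suc k. of_nat (fact k div fact i) * (of_nat (fact i) * sym_coeff xs i) * psum (Suc k - i) xs)"
    unfolding sum_distrib_left by (intro sum.cong) (simp_all add: algebra_simps)
  moreover have "of_nat (fact (Suc k)) * sym_coeff xs (Suc k)
      = of_nat (fact k) * (of_nat (Suc k) * sym_coeff xs (Suc k))"
    by (simp add: algebra_simps)
  ultimately show ?thesis unfolding newton_identity_Suc by (simp add: algebra_simps)
qed

lemma coeff_monic_of:
  "coeff (monic_of xs) k = (if k \<le> length xs then sym_coeff xs (length xs - k) else 0)"
proof (induction xs arbitrary: k)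
  case Nil
  then show ?case by (simp add: monic_of_def coeff_1)
next
  case (Cons y ys)
  have "monic_of (y # ys) = pCons 0 (monic_of ys) - smult y (monic_of ys)"
    by (simp add: monic_of_def mult_pCons_left)
  then have "coeff (monic_of (y # ys)) k = coeff (pCons 0 (monic_of ys)) k - y * coeff (monic_of ys) k"
    by simp
  moreover have "sym_coeff (y # ys) (length ys - j) = sym_coeff ys (length ys - j) -
      y * (if Suc j \<le> length ys then sym_coeff ys (length ys - Suc j) else 0)" if "j \<le> length ys" for j
    using that by (cases "j = length ys") (auto simp: Suc_diff_Suc[symmetric])
  ultimately show ?case using Cons.IH sym_coeff_beyond[of ys "Suc (length ys)"]
    by (cases k) (auto simp: coeff_pCons Suc_diff_le)
qed

lemma acoeff_eq_sym_coeff: "i \<le> length xs \<Longrightarrow> acoeff xs i = sym_coeff xs i"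
  unfolding acoeff_def coeff_monic_of by simp

lemma int_poly_of_sym_coeff_acoeff:
  "int_poly_of N (\<lambda>xs j. acoeff xs (Suc j)) {xs. length xs = N} (\<lambda>xs. sym_coeff xs i)"
proof -
  consider "i = 0" | "N < i" | "0 < i" "i \<le> N" by linarith
  then show ?thesis
  proof cases
    case 1
    then show ?thesis using int_poly_of_const[of N _ _ 1] by simp
  next
    case 2
    then show ?thesis
      by (intro int_poly_of_cong[OF int_poly_of_const[of _ _ _ 0]]) (simp add: sym_coeff_beyond)
  next
    case 3
    then have "int_poly_of N (\<lambda>xs j. acoeff xs (Suc j)) {xs. length xs = N} (\<lambda>xs. acoeff xs (Suc (i - 1)))"
      by (intro int_poly_of_var) auto
    then show ?thesis by (rule int_poly_of_cong) (use 3 in \<open>simp add: acoeff_eq_sym_coeff\<close>)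
  qed
qed

lemma int_poly_of_psum_if_sym_coeff:
  fixes ys :: "'z \<Rightarrow> 'a::comm_ring_1 list"
  assumes sym: "\<And>i. int_poly_of n v D (\<lambda>z. sym_coeff (ys z) i)"
    and len: "\<And>z. z \<in> D \<Longrightarrow> length (ys z) = N"
  shows "int_poly_of n v D (\<lambda>z. psum m (ys z))"
proof (induction m rule: less_induct)
  case (less m)
  show ?case
  proof (cases m)
    case 0
    show ?thesis
      by (rule int_poly_of_cong[OF int_poly_of_of_nat[of n v D N]]) (simp add: 0 psum_0 len)
  next
    case (Suc k)
    have poly: "int_poly_of n v D (\<lambda>z. - (\<Sum>i<k. sym_coeff (ys z) (Suc i) * psum (k - i) (ys z))
        - of_nat (Suc k) * sym_coeff (ys z) (Suc k))"
      using Suc less sym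
      by (intro int_poly_of_diff int_poly_of_uminus int_poly_of_sum int_poly_of_mult int_poly_of_of_nat)
        auto
    show ?thesis by (rule int_poly_of_cong[OF poly]) (simp only: Suc psum_Suc_newton)
  qed
qed

text \<open>Newton's identities express \<open>q! e\<^sub>q\<close>, but not \<open>e\<^sub>q\<close> itself, with integer coefficients in the
  power sums.\<close>
lemma int_poly_of_fact_sym_coeff_if_psum:
  fixes ys :: "'z \<Rightarrow> 'a::comm_ring_1 list"
  assumes psum: "\<And>m. int_poly_of n v D (\<lambda>z. psum m (ys z))"
  shows "int_poly_of n v D (\<lambda>z. of_nat (fact q) * sym_coeff (ys z) q)"
proof (induction q rule: less_induct)
  case (less q)
  show ?case
  proof (cases q)
    case 0
    then show ?thesis using int_poly_of_const[of n v D 1] by simp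
  next
    case (Suc k)
    have poly: "int_poly_of n v D (\<lambda>z. - (\<Sum>i<Suc k. of_nat (fact k div fact i)
        * (of_nat (fact i) * sym_coeff (ys z) i) * psum (Suc k - i) (ys z)))"
      using Suc less psum
      by (intro int_poly_of_uminus int_poly_of_sum
          int_poly_of_mult[OF int_poly_of_mult[OF int_poly_of_of_nat]])
        auto
    show ?thesis by (rule int_poly_of_cong[OF poly]) (simp only: Suc fact_sym_coeff_Suc_newton)
  qed
qed

section \<open>Sums over tuples of distinct indices\<close>

fun distinct_tuples :: "nat \<Rightarrow> nat \<Rightarrow> nat list list" where
  "distinct_tuples n 0 = [[]]"
| "distinct_tuples n (Suc K) =
     concat (map (\<lambda>js. map (\<lambda>j. j # js) (filter (\<lambda>j. j \<notin> set js) [0..<n])) (distinct_tuples n K))"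

lemma set_distinct_tuples:
  "set (distinct_tuples n K) = {js. length js = K \<and> distinct js \<and> set js \<subseteq> {..<n}}"
proof (induction K)
  case (Suc K)
  show ?case
  proof (intro equalityI subsetI)
    fix js assume "js \<in> {js. length js = Suc K \<and> distinct js \<and> set js \<subseteq> {..<n}}"
    then show "js \<in> set (distinct_tuples n (Suc K))" using Suc by (cases js) force+
  qed (use Suc in auto)
qed auto

lemma distinct_tuples_ne: "K \<le> n \<Longrightarrow> distinct_tuples n K \<noteq> []"
proof -
  assume "K \<le> n"
  then have "[0..<K] \<in> set (distinct_tuples n K)" by (auto simp: set_distinct_tuples)
  then show ?thesis by auto
qed

lemma distinct_tuple_inj_on:
  assumes "js \<in> set (distinct_tuples n K)"
  shows "inj_on (nth js) {..<K}" "nth js ` {..<K} \<subseteq> {..<n}"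
  using assms by (auto simp: set_distinct_tuples inj_on_nth dest!: nth_mem)

lemma map_inj_on_in_distinct_tuples:
  "inj_on f {..<K} \<Longrightarrow> f ` {..<K} \<subseteq> {..<n} \<Longrightarrow> map f [0..<K] \<in> set (distinct_tuples n K)"
  by (auto simp: set_distinct_tuples distinct_map atLeast0LessThan)

definition tuple_monom :: "'a::comm_ring_1 list \<Rightarrow> nat list \<Rightarrow> nat list \<Rightarrow> 'a" where
  "tuple_monom ys js e = (\<Prod>t<length e. (ys ! (js ! t)) ^ (e ! t))"

text \<open>Up to multiplicities, the monomial symmetric function of \<open>ys\<close> with exponent vector \<open>e\<close>.\<close>
definition tuple_monom_sum :: "'a::comm_ring_1 list \<Rightarrow> nat list \<Rightarrow> 'a" where
  "tuple_monom_sum ys e = (\<Sum>js\<leftarrow>distinct_tuples (length ys) (length e). tuple_monom ys js e)"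

lemma tuple_monom_Cons: "tuple_monom ys (j # js) (d # e) = (ys ! j) ^ d * tuple_monom ys js e"
  unfolding tuple_monom_def
    by (simp only: length_Cons prod.lessThan_Suc_shift nth_Cons_0 nth_Cons_Suc)

lemma tuple_monom_update:
  assumes "t < length e"
  shows "tuple_monom ys js e * (ys ! (js ! t)) ^ d = tuple_monom ys js (e[t := e ! t + d])"
proof -
  have "tuple_monom ys js (e[t := e ! t + d]) =
      (\<Prod>s<length e. (ys ! (js ! s)) ^ (e ! s) * (if s = t then (ys ! (js ! s)) ^ d else 1))"
    unfolding tuple_monom_def by (rule prod.cong) (auto simp: nth_list_update power_add)
  also have "\<dots> = tuple_monom ys js e * (ys ! (js ! t)) ^ d"
    using assms unfolding tuple_monom_def prod.distrib by (simp add: prod.delta)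
  finally show ?thesis by simp
qed

lemma sum_list_map_concat: "(\<Sum>x\<leftarrow>concat xss. f x) = (\<Sum>xs\<leftarrow>xss. \<Sum>x\<leftarrow>xs. f x)"
  by (induction xss) auto

lemma sum_list_sum_swap:
  "(\<Sum>x\<leftarrow>xs. \<Sum>t\<in>S. F x t) = (\<Sum>t\<in>S. \<Sum>x\<leftarrow>xs. (F x t :: 'a::comm_monoid_add))"
  by (induction xs) (auto simp: sum.distrib)

lemma sum_list_filter_notin:
  fixes f :: "nat \<Rightarrow> 'a::ab_group_add"
  assumes "distinct js" "set js \<subseteq> {..<n}"
  shows "(\<Sum>j\<leftarrow>filter (\<lambda>j. j \<notin> set js) [0..<n]. f j) = (\<Sum>j<n. f j) - (\<Sum>t<length js. f (js ! t))"
proof -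
  have "set (filter (\<lambda>j. j \<notin> set js) [0..<n]) = {..<n} - set js" by auto
  then have "(\<Sum>j\<leftarrow>filter (\<lambda>j. j \<notin> set js) [0..<n]. f j) = sum f ({..<n} - set js)"
    by (metis distinct_filter distinct_upt sum_list_distinct_conv_sum_set)
  also have "\<dots> = (\<Sum>j<n. f j) - sum f (set js)" using assms(2) by (simp add: sum_diff)
  also have "sum f (set js) = (\<Sum>t<length js. f (js ! t))"
    using assms(1)
      by (simp add: sum_list_distinct_conv_sum_set[symmetric] sum_list_sum_nth atLeast0LessThan)
  finally show ?thesis .
qed

lemma psum_conv_sum_nth: "psum d ys = (\<Sum>j<length ys. (ys ! j) ^ d)"
  unfolding psum_def by (simp add: sum_list_sum_nth atLeast0LessThan)

text \<open>Extending a tuple by an index \<open>j\<close> ranging over all indices, and then subtracting the \<open>j\<close>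
  already in the tuple.\<close>
lemma tuple_monom_sum_Cons:
  "tuple_monom_sum ys (d # e) =
     tuple_monom_sum ys e * psum d ys - (\<Sum>t<length e. tuple_monom_sum ys (e[t := e ! t + d]))"
proof -
  let ?n = "length ys" and ?K = "length e"
  let ?T = "distinct_tuples ?n ?K"
  have "tuple_monom_sum ys (d # e) =
      (\<Sum>js\<leftarrow>?T. \<Sum>j\<leftarrow>filter (\<lambda>j. j \<notin> set js) [0..<?n]. tuple_monom ys (j # js) (d # e))"
    unfolding tuple_monom_sum_def by (simp add: sum_list_map_concat comp_def)
  also have "\<dots> = (\<Sum>js\<leftarrow>?T.
      tuple_monom ys js e * psum d ys - (\<Sum>t<?K. tuple_monom ys js (e[t := e ! t + d])))"
  proof (rule arg_cong[where f = sum_list], rule map_cong[OF refl])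
    fix js assume "js \<in> set ?T"
    then have js: "length js = ?K" "distinct js" "set js \<subseteq> {..<?n}"
      by (auto simp: set_distinct_tuples)
    have "(\<Sum>j\<leftarrow>filter (\<lambda>j. j \<notin> set js) [0..<?n]. tuple_monom ys (j # js) (d # e))
        = tuple_monom ys js e * (\<Sum>j\<leftarrow>filter (\<lambda>j. j \<notin> set js) [0..<?n]. (ys ! j) ^ d)"
      by (simp add: tuple_monom_Cons sum_list_const_mult mult.commute)
    also have "\<dots> = tuple_monom ys js e * (psum d ys - (\<Sum>t<?K. (ys ! (js ! t)) ^ d))"
      using sum_list_filter_notin[OF js(2,3), of "\<lambda>j. (ys ! j) ^ d"] js(1)
        by (simp add: psum_conv_sum_nth)
    finally show "(\<Sum>j\<leftarrow>filter (\<lambda>j. j \<notin> set js) [0..<?n]. tuple_monom ys (j # js) (d # e))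
        = tuple_monom ys js e * psum d ys - (\<Sum>t<?K. tuple_monom ys js (e[t := e ! t + d]))"
      by (simp add: right_diff_distrib sum_distrib_left tuple_monom_update)
  qed
  also have "\<dots> = tuple_monom_sum ys e * psum d ys - (\<Sum>t<?K. tuple_monom_sum ys (e[t := e ! t + d]))"
    unfolding tuple_monom_sum_def
    by (simp only: sum_list_subtractf sum_list_mult_const sum_list_sum_swap length_list_update)
  finally show ?thesis .
qed

lemma sum_list_update_nat: "t < length e \<Longrightarrow> sum_list (e[t := e ! t + d]) = sum_list e + (d::nat)"
  by (induction e arbitrary: t) (auto split: nat.split)

lemma int_poly_of_tuple_monom_sum:
  "int_poly_of (Suc (sum_list e)) (\<lambda>(ys :: 'a::comm_ring_1 list) j. psum j ys) UNIV
     (\<lambda>ys. tuple_monom_sum ys e)"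
proof (induction "length e" arbitrary: e)
  case 0
  then show ?case using int_poly_of_const[of _ _ _ 1]
    by (simp add: tuple_monom_sum_def tuple_monom_def)
next
  case (Suc K)
  then obtain d e' where e: "e = d # e'" and K: "length e' = K" by (cases e) auto
  let ?n = "Suc (sum_list e)"
  let ?psums = "\<lambda>(ys :: 'a list) j. psum j ys"
  have "int_poly_of ?n ?psums UNIV (\<lambda>ys. tuple_monom_sum ys e')"
    using Suc.hyps(1)[OF K[symmetric]] by (rule int_poly_of_mono) (simp add: e)
  moreover have "int_poly_of ?n ?psums UNIV (\<lambda>ys. psum d ys)"
    by (rule int_poly_of_var) (simp add: e)
  moreover have "int_poly_of ?n ?psums UNIV (\<lambda>ys. tuple_monom_sum ys (e'[t := e' ! t + d]))"
    if "t < K" for t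
  proof -
    have "Suc (sum_list (e'[t := e' ! t + d])) = ?n"
      using sum_list_update_nat[of t e' d] that K by (simp add: e)
    then show ?thesis using Suc.hyps(1)[of "e'[t := e' ! t + d]"] that K by simp
  qed
  ultimately show ?case unfolding e tuple_monom_sum_Cons K
    by (intro int_poly_of_diff int_poly_of_mult int_poly_of_sum) auto
qed

definition tuple_values :: "((nat \<Rightarrow> 'a) \<Rightarrow> 'a) \<Rightarrow> 'a list \<Rightarrow> nat \<Rightarrow> 'a list" where
  "tuple_values g ys K = map (\<lambda>js. g (\<lambda>t. ys ! (js ! t))) (distinct_tuples (length ys) K)"

lemma length_tuple_values: "length (tuple_values g ys K) = length (distinct_tuples (length ys) K)"
  unfolding tuple_values_def by simp

lemma tuple_monom_sum_nth_default:
  assumes "length e \<le> K"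
  shows "(\<Sum>js\<leftarrow>distinct_tuples (length ys) K. monom_eval (\<lambda>t. ys ! (js ! t)) e)
    = tuple_monom_sum ys (map (nth_default 0 e) [0..<K])"
  unfolding tuple_monom_sum_def tuple_monom_def monom_eval_nth_default[OF assms] by simp

text \<open>Expanding \<open>g\<close> into monomials, each monomial summed over all tuples is a \<open>tuple_monom_sum\<close>.\<close>
lemma int_poly_of_sum_tuple_values:
  fixes g :: "(nat \<Rightarrow> complex) \<Rightarrow> complex"
  assumes "int_poly_fun K g"
  shows "\<exists>m. int_poly_of m (\<lambda>ys j. psum j ys) UNIV (\<lambda>ys. sum_list (tuple_values g ys K))"
proof -
  let ?psums = "\<lambda>(ys :: complex list) j. psum j ys"
  obtain p where p: "mpoly_vars K p" "\<And>v. g v = mpoly_eval p v"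
    using int_poly_fun_mpoly[OF assms] by blast
  have "\<exists>m. int_poly_of m ?psums UNIV
      (\<lambda>ys. \<Sum>js\<leftarrow>distinct_tuples (length ys) K. mpoly_eval p (\<lambda>t. ys ! (js ! t)))"
    using p(1)
  proof (induction p)
    case Nil
    show ?case using int_poly_of_const[of 0 ?psums UNIV 0] by auto
  next
    case (Cons ce p)
    obtain c e where ce: "ce = (c, e)" by force
    have e: "length e \<le> K" and "mpoly_vars K p" using Cons.prems unfolding ce mpoly_vars_def by auto
    then obtain m where m: "int_poly_of m ?psums UNIV
        (\<lambda>ys. \<Sum>js\<leftarrow>distinct_tuples (length ys) K. mpoly_eval p (\<lambda>t. ys ! (js ! t)))"
      using Cons.IH by blast
    let ?e = "map (nth_default 0 e) [0..<K]"
    let ?m = "max m (Suc (sum_list ?e))"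
    have "int_poly_of ?m ?psums UNIV (\<lambda>ys. of_int c * tuple_monom_sum ys ?e +
        (\<Sum>js\<leftarrow>distinct_tuples (length ys) K. mpoly_eval p (\<lambda>t. ys ! (js ! t))))"
      using int_poly_of_mono[OF int_poly_of_tuple_monom_sum, of ?e ?m] int_poly_of_mono[OF m, of ?m]
      by (intro int_poly_of_add int_poly_of_mult int_poly_of_const) auto
    then show ?case
      unfolding ce by (intro exI[of _ ?m])
        (simp add: sum_list_addf sum_list_const_mult tuple_monom_sum_nth_default[OF e])
  qed
  then show ?thesis unfolding tuple_values_def p(2)[abs_def] by (simp add: comp_def)
qed

lemma int_poly_of_fact_sym_coeff_tuple_values:
  fixes g :: "(nat \<Rightarrow> complex) \<Rightarrow> complex" and zs :: "'z \<Rightarrow> complex list"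
  assumes g: "int_poly_fun K g" and psum: "\<And>m. int_poly_of n v D (\<lambda>z. psum m (zs z))"
  shows "int_poly_of n v D (\<lambda>z. of_nat (fact q) * sym_coeff (tuple_values g (zs z) K) q)"
proof (rule int_poly_of_fact_sym_coeff_if_psum)
  fix m
  have "int_poly_fun K (\<lambda>w. g w ^ m)"
    by (induction m) (auto intro: int_poly_fun_mult g int_poly_fun_const[where c = 1, simplified])
  then obtain k where "int_poly_of k (\<lambda>ys j. psum j ys) UNIV
      (\<lambda>ys. sum_list (tuple_values (\<lambda>w. g w ^ m) ys K))"
    using int_poly_of_sum_tuple_values by blast
  then have "int_poly_of n v D (\<lambda>z. sum_list (tuple_values (\<lambda>w. g w ^ m) (zs z) K))"
    by (rule int_poly_of_compose) (use psum in auto)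
  then show "int_poly_of n v D (\<lambda>z. psum m (tuple_values g (zs z) K))"
    by (simp add: psum_def tuple_values_def comp_def)
qed

section \<open>The size of the roots of a polynomial\<close>

lemma prod_minus_conv_sum_sym_coeff:
  "(\<Prod>a\<leftarrow>ys. y - a) = (\<Sum>q\<le>length ys. sym_coeff ys q * y ^ (length ys - q))"
proof (induction ys)
  case (Cons a ys)
  let ?n = "length ys"
  have "(\<Sum>q\<le>Suc ?n. sym_coeff (a # ys) q * y ^ (Suc ?n - q))
      = y ^ Suc ?n + (\<Sum>q\<le>?n. (sym_coeff ys (Suc q) - a * sym_coeff ys q) * y ^ (?n - q))"
    by (simp only: sum.atMost_Suc_shift) simp
  also have "\<dots> = (y ^ Suc ?n + (\<Sum>q\<le>?n. sym_coeff ys (Suc q) * y ^ (?n - q)))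
      - a * (\<Sum>q\<le>?n. sym_coeff ys q * y ^ (?n - q))"
    by (simp add: algebra_simps sum_subtractf sum_distrib_left)
  also have "y ^ Suc ?n + (\<Sum>q\<le>?n. sym_coeff ys (Suc q) * y ^ (?n - q))
      = (\<Sum>q\<le>Suc ?n. sym_coeff ys q * y ^ (Suc ?n - q))"
    by (simp only: sum.atMost_Suc_shift) simp
  also have "\<dots> = y * (\<Sum>q\<le>?n. sym_coeff ys q * y ^ (?n - q))"
    unfolding sum_distrib_left using sym_coeff_beyond[of ys "Suc ?n"]
    by (simp add: Suc_diff_le algebra_simps)
  finally show ?case using Cons.IH by (simp add: algebra_simps)
qed simp

text \<open>Fujiwara's bound: if \<open>|e\<^sub>q| \<le> T\<^sup>q\<close> for all \<open>q \<ge> 1\<close> then \<open>|y| > 2T\<close> would make \<open>y\<^sup>n\<close> dominate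
  the other terms of \<open>\<Prod>a. y - a\<close>.\<close>
lemma norm_root_le_twice:
  fixes ys :: "'a::real_normed_field list"
  assumes y: "y \<in> set ys" and T: "0 \<le> T"
    and bound: "\<And>q. 1 \<le> q \<Longrightarrow> q \<le> length ys \<Longrightarrow> norm (sym_coeff ys q) \<le> T ^ q"
  shows "norm y \<le> 2 * T"
proof (rule ccontr)
  assume "\<not> ?thesis"
  then have bT: "2 * T < norm y" by simp
  define b where "b = norm y"
  define n where "n = length ys"
  have b0: "0 < b" using bT T unfolding b_def by linarith
  have "(\<Prod>a\<leftarrow>ys. y - a) = 0" using y by (induction ys) auto
  then have "y ^ n + (\<Sum>q\<in>{1..n}. sym_coeff ys q * y ^ (n - q)) = 0"
    unfolding prod_minus_conv_sum_sym_coeff n_def[symmetric]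
      by (simp add: atMost_atLeast0 sum.atLeast_Suc_atMost)
  then have "b ^ n = norm (\<Sum>q\<in>{1..n}. sym_coeff ys q * y ^ (n - q))"
    unfolding b_def by (metis add_eq_0_iff norm_minus_cancel norm_power)
  also have "\<dots> \<le> (\<Sum>q\<in>{1..n}. (b / 2) ^ q * b ^ (n - q))"
  proof (rule order_trans[OF norm_sum sum_mono])
    fix q assume q: "q \<in> {1..n}"
    have "T ^ q \<le> (b / 2) ^ q" using T bT unfolding b_def by (intro power_mono) auto
    then have "norm (sym_coeff ys q) \<le> (b / 2) ^ q"
      using bound[of q] q unfolding n_def by auto
    then show "norm (sym_coeff ys q * y ^ (n - q)) \<le> (b / 2) ^ q * b ^ (n - q)"
      unfolding norm_mult norm_power b_def by (simp add: mult_right_mono)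
  qed
  also have "\<dots> = (\<Sum>q\<in>{1..n}. (1 / 2) ^ q) * b ^ n"
    unfolding sum_distrib_right
    by (rule sum.cong) (auto simp: power_divide field_simps power_add[symmetric])
  also have "(\<Sum>q\<in>{1..n}. (1 / 2 :: real) ^ q) = 1 - (1 / 2) ^ n"
    by (induction n) (auto simp: algebra_simps)
  finally have "b ^ n * (1 / 2) ^ n \<le> 0" by (simp add: algebra_simps)
  moreover have "0 < b ^ n * (1 / 2 :: real) ^ n" using b0 by simp
  ultimately show False by linarith
qed

lemma norm_sym_coeff_le:
  fixes ys :: "'a::real_normed_field list"
  assumes "\<And>y. y \<in> set ys \<Longrightarrow> norm y \<le> B" "0 \<le> B"
  shows "norm (sym_coeff ys q) \<le> 2 ^ length ys * B ^ q"
  using assms(1)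
proof (induction ys arbitrary: q)
  case (Cons y ys)
  show ?case
  proof (cases q)
    case (Suc i)
    have "norm (sym_coeff (y # ys) q) \<le> norm (sym_coeff ys (Suc i)) + norm y * norm (sym_coeff ys i)"
      using Suc norm_triangle_ineq4[of "sym_coeff ys (Suc i)" "y * sym_coeff ys i"]
        by (simp add: norm_mult)
    also have "\<dots> \<le> 2 ^ length ys * B ^ Suc i + B * (2 ^ length ys * B ^ i)"
      using Cons.IH[of "Suc i"] Cons.IH[of i] Cons.prems[of y] Cons.prems assms(2)
      by (intro add_mono mult_mono) (simp_all del: power_Suc)
    finally show ?thesis using Suc by (simp add: algebra_simps)
  qed (use one_le_power[of "2::real" "Suc (length ys)"] in simp)
qed (use assms(2) in simp)

definition coeff_gauge :: "'a::real_normed_field list \<Rightarrow> real" where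
  "coeff_gauge ys = (\<Sum>q=1..length ys. norm (of_nat (fact q) * sym_coeff ys q) powr (1 / real q))"

lemma coeff_gauge_nonneg: "0 \<le> coeff_gauge ys"
  unfolding coeff_gauge_def by (simp add: sum_nonneg)

lemma norm_le_coeff_gauge:
  fixes ys :: "'a::real_normed_field list"
  assumes "y \<in> set ys"
  shows "norm y \<le> 2 * coeff_gauge ys"
proof (rule norm_root_le_twice[OF assms coeff_gauge_nonneg])
  fix q assume q: "1 \<le> q" "q \<le> length ys"
  let ?a = "norm (of_nat (fact q) * sym_coeff ys q)"
  have "norm (sym_coeff ys q) \<le> ?a"
    by (simp add: norm_mult mult_le_cancel_right1)
  also have "\<dots> = (?a powr (1 / real q)) ^ q"
    using q by (simp add: root_powr_inverse[symmetric])
  also have "\<dots> \<le> coeff_gauge ys ^ q"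
    unfolding coeff_gauge_def using q by (intro power_mono member_le_sum) auto
  finally show "norm (sym_coeff ys q) \<le> coeff_gauge ys ^ q" .
qed

lemma coeff_gauge_le:
  fixes ys :: "'a::real_normed_field list" and B :: real
  assumes "\<And>y. y \<in> set ys \<Longrightarrow> norm y \<le> B" "0 \<le> B"
  shows "coeff_gauge ys \<le> real (length ys) * fact (length ys) * 2 ^ length ys * B"
proof -
  define n where "n = length ys"
  define K :: real where "K = fact n * 2 ^ n"
  have K: "1 \<le> K"
    unfolding K_def using mult_mono[OF fact_ge_1[of n] one_le_power[of "2::real" n]] by simp
  have "coeff_gauge ys \<le> (\<Sum>q=1..n. K * B)" unfolding coeff_gauge_def n_def[symmetric]
  proof (rule sum_mono)
    fix q assume q: "q \<in> {1..n}"
    have "norm (of_nat (fact q) * sym_coeff ys q) \<le> fact q * (2 ^ n * B ^ q)"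
      using norm_sym_coeff_le[OF assms, of _ q] unfolding n_def by (simp add: norm_mult)
    also have "\<dots> \<le> K * B ^ q"
      unfolding K_def using q assms(2) fact_mono[of q n, where 'a = real]
      by (simp add: mult.assoc mult_right_mono)
    finally have "norm (of_nat (fact q) * sym_coeff ys q) powr (1 / real q) \<le> (K * B ^ q) powr (1 / real q)"
      by (rule powr_mono2[rotated 2]) auto
    also have "\<dots> = K powr (1 / real q) * B"
      using K assms(2) q
        by (simp add: powr_mult root_powr_inverse[symmetric] real_root_power_cancel)
    also have "K powr (1 / real q) \<le> K"
      using K q powr_mono[of "1 / real q" 1 K] by simp
    finally show "norm (of_nat (fact q) * sym_coeff ys q) powr (1 / real q) \<le> K * B"
      using assms(2) by (simp add: mult_right_mono)
  qed
  then show ?thesis unfolding K_def n_def by (simp add: mult.assoc)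
qed

lemma Max_norm_sim_coeff_gauge:
  fixes ys :: "'a::real_normed_field list"
  assumes "ys \<noteq> []"
  shows "sim_by (1 / (real (length ys) * fact (length ys) * 2 ^ length ys)) 2
    (Max (norm ` set ys)) (coeff_gauge ys)"
proof -
  let ?M = "Max (norm ` set ys)"
  have M: "norm y \<le> ?M" if "y \<in> set ys" for y using that by simp
  have "?M \<in> norm ` set ys" using assms by simp
  then have "?M \<le> 2 * coeff_gauge ys" using norm_le_coeff_gauge by fastforce
  moreover have "coeff_gauge ys \<le> real (length ys) * fact (length ys) * 2 ^ length ys * ?M"
    using coeff_gauge_le[OF M] M assms by (metis list.set_sel(1) norm_ge_zero order_trans)
  ultimately show ?thesis
    using assms unfolding sim_by_def by (simp add: field_simps)
qed

section \<open>The roots as an indexed family\<close>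

lemma mset_conv_image_mset_nth: "mset xs = image_mset (nth xs) (mset_set {..<length xs})"
  by (metis map_nth mset_map mset_upt atLeast0LessThan)

lemma subset_mset_set_eq_mset_set:
  assumes "B \<subseteq># mset_set U" "finite U"
  shows "B = mset_set (set_mset B)"
proof (rule multiset_eqI)
  fix a
  have "count B a \<le> count (mset_set U) a" using assms(1) by (simp add: mset_subset_eq_count)
  also have "\<dots> \<le> 1" using assms(2) by (simp add: count_mset_set')
  finally have le1: "count B a \<le> 1" .
  show "count B a = count (mset_set (set_mset B)) a"
  proof (cases "a \<in># B")
    case True
    then have "0 < count B a" by simp
    then have "count B a = 1" using le1 by linarith
    then show ?thesis using True by (simp add: count_mset_set')
  qed (simp add: not_in_iff count_mset_set')
qed

lemma subset_mset_obtain_indices: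
  assumes "T \<subseteq># mset xs"
  obtains I where "I \<subseteq> {..<length xs}" "T = image_mset (nth xs) (mset_set I)"
proof -
  obtain C where "image_mset (nth xs) (mset_set {..<length xs}) = T + C"
    using assms unfolding mset_conv_image_mset_nth subset_mset.le_iff_add by blast
  then obtain B C' where B: "mset_set {..<length xs} = B + C'" "T = image_mset (nth xs) B"
    using image_mset_eq_plusD by blast
  then have "B \<subseteq># mset_set {..<length xs}" by simp
  then have "B = mset_set (set_mset B)" "set_mset B \<subseteq> {..<length xs}"
    using subset_mset_set_eq_mset_set set_mset_mono by fastforce+
  then show ?thesis using that B(2) by metis
qed

text \<open>Nonemptiness matters: \<open>diam {#}\<close> is \<open>Sup {}\<close>, an unspecified real, while \<open>diameter {} = 0\<close>.\<close>
lemma diam_image_mset_mset_set: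
  assumes "finite I" "I \<noteq> {}"
  shows "diam (image_mset x (mset_set I)) = diameter (x ` I)"
proof -
  have "{cmod (a - b) | a b. a \<in># image_mset x (mset_set I) \<and> b \<in># image_mset x (mset_set I)}
      = (\<lambda>(a, b). dist a b) ` (x ` I \<times> x ` I)"
    using assms(1) by (auto simp: dist_norm)
  then show ?thesis using assms unfolding diam_def diameter_def by simp
qed

lemma diam_sub_multisets_eq:
  assumes "0 < m"
  shows "{diam T | T. T \<subseteq># mset xs \<and> size T = m \<and> P (set_mset T)}
    = {diameter (nth xs ` I) | I. I \<subseteq> {..<length xs} \<and> card I = m \<and> P (nth xs ` I)}"
    (is "?L = ?R")
proof
  show "?L \<subseteq> ?R"
  proof
    fix d assume "d \<in> ?L"
    then obtain T where T: "d = diam T" "T \<subseteq># mset xs" "size T = m" "P (set_mset T)" by blast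
    obtain I where I: "I \<subseteq> {..<length xs}" "T = image_mset (nth xs) (mset_set I)"
      using subset_mset_obtain_indices[OF T(2)] .
    have "finite I" using I(1) finite_subset by blast
    moreover have "card I = m" using T(3) I(2) by simp
    ultimately show "d \<in> ?R" using T I assms diam_image_mset_mset_set by fastforce
  qed
next
  show "?R \<subseteq> ?L"
  proof
    fix d assume "d \<in> ?R"
    then obtain I where I: "d = diameter (nth xs ` I)" "I \<subseteq> {..<length xs}" "card I = m"
      "P (nth xs ` I)" by blast
    let ?T = "image_mset (nth xs) (mset_set I)"
    have I': "finite I" "I \<noteq> {}" using I(2,3) assms finite_subset by auto
    have "?T \<subseteq># mset xs"
      unfolding mset_conv_image_mset_nth using I(2)
      by (intro image_mset_subseteq_mono) (simp add: subset_imp_msubset_mset_set)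
    moreover have "d = diam ?T" using I(1) diam_image_mset_mset_set[OF I'] by simp
    moreover have "size ?T = m" "set_mset ?T = nth xs ` I" using I(3) I'(1) by auto
    ultimately show "d \<in> ?L" using I(4) by auto
  qed
qed

lemma Labs_eq_cluster_scale: "k < length xs \<Longrightarrow> Labs xs k = cluster_scale (nth xs) {..<length xs} k"
  unfolding Labs_def cluster_scale_def using diam_sub_multisets_eq[of "length xs - k" xs "\<lambda>_. True"]
  by simp

lemma Lloc_eq_local_cluster_scale:
  "k < length xs \<Longrightarrow> Lloc xs k a = local_cluster_scale (nth xs) {..<length xs} k a"
  unfolding Lloc_def local_cluster_scale_def
    using diam_sub_multisets_eq[of "length xs - k" xs "\<lambda>S. a \<in> S"]
  by simp

lemma Delta_eq_Sup_pair_prod: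
  "Delta xs r = Sup {pair_prod (nth xs) f r | f. inj_on f {..<2*r} \<and> f ` {..<2*r} \<subseteq> {..<length xs}}"
  unfolding Delta_def pair_prod_def by (simp add: dist_norm)

section \<open>The four estimates\<close>

lemma sim_by_trans:
  "sim_by c C A B \<Longrightarrow> sim_by c' C' B X \<Longrightarrow> 0 \<le> c \<Longrightarrow> 0 \<le> C \<Longrightarrow> sim_by (c * c') (C * C') A X"
  unfolding sim_by_def by (metis mult.assoc mult_left_mono order_trans)

lemma sim_by_mono:
  "sim_by c C A B \<Longrightarrow> c' \<le> c \<Longrightarrow> C \<le> C' \<Longrightarrow> 0 \<le> B \<Longrightarrow> sim_by c' C' A B"
  unfolding sim_by_def by (meson mult_right_mono order_trans)

lemma Max_norm_tuple_values_sim_poly_gauge: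
  fixes g :: "(nat \<Rightarrow> complex) \<Rightarrow> complex" and zs :: "'z \<Rightarrow> complex list"
  assumes g: "int_poly_fun K g" and K: "K \<le> n" and len: "\<And>z. z \<in> D \<Longrightarrow> length (zs z) = n"
    and psum: "\<And>m. int_poly_of p v D (\<lambda>z. psum m (zs z))"
  shows "\<exists>M\<ge>1. \<exists>\<sigma>. (\<forall>q. mpoly_vars p (\<sigma> q)) \<and> (\<exists>c>0. \<exists>C>0. \<forall>z\<in>D.
    sim_by c C (Max (norm ` set (tuple_values g (zs z) K)))
      (\<Sum>q=1..M. cmod (mpoly_eval (\<sigma> q) (v z)) powr (1 / real q)))"
proof -
  define M where "M = length (distinct_tuples n K)"
  have M: "1 \<le> M" using distinct_tuples_ne[OF K] unfolding M_def by (simp add: Suc_le_eq)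
  have "\<forall>q. \<exists>s. mpoly_vars p s \<and>
      (\<forall>z\<in>D. of_nat (fact q) * sym_coeff (tuple_values g (zs z) K) q = mpoly_eval s (v z))"
    using int_poly_of_mpoly[OF int_poly_of_fact_sym_coeff_tuple_values[OF g psum]] by blast
  then obtain \<sigma> where \<sigma>: "\<And>q. mpoly_vars p (\<sigma> q)"
    "\<And>q z. z \<in> D \<Longrightarrow> of_nat (fact q) * sym_coeff (tuple_values g (zs z) K) q = mpoly_eval (\<sigma> q) (v z)"
    by metis
  have "sim_by (1 / (real M * fact M * 2 ^ M)) 2 (Max (norm ` set (tuple_values g (zs z) K)))
      (\<Sum>q=1..M. cmod (mpoly_eval (\<sigma> q) (v z)) powr (1 / real q))" if "z \<in> D" for z
  proof -
    have "length (tuple_values g (zs z) K) = M"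
      using len[OF that] unfolding M_def length_tuple_values by simp
    moreover have "tuple_values g (zs z) K \<noteq> []" using calculation M by auto
    ultimately show ?thesis
      using Max_norm_sim_coeff_gauge[of "tuple_values g (zs z) K"] \<sigma>(2)[OF that]
      unfolding coeff_gauge_def by simp
  qed
  moreover have "0 < 1 / (real M * fact M * 2 ^ M)" using M by simp
  ultimately show ?thesis using M \<sigma>(1)
    by (intro exI[of _ M] exI[of _ \<sigma>] conjI exI[of _ "1 / (real M * fact M * 2 ^ M)"] exI[of _ 2]) auto
qed

lemma exists_root_Lloc_sim_Labs:
  assumes "xs \<noteq> []"
  shows "\<exists>\<alpha>\<in>set xs. \<forall>i. 2 * i \<le> length xs \<longrightarrow> sim_by 1 2 (Lloc xs i \<alpha>) (Labs xs i)"
proof -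
  let ?A = "{..<length xs}" and ?x = "nth xs"
  have "?A \<noteq> {}" using assms by (simp add: lessThan_empty_iff)
  then obtain u where central: "central_index ?x ?A u"
    using central_index_exists[OF finite_lessThan] by blast
  then have u: "u \<in> ?A" unfolding central_index_def by blast
  have "sim_by 1 2 (Lloc xs i (xs ! u)) (Labs xs i)" if i: "2 * i \<le> length xs" for i
  proof -
    have i': "i < length xs" using i assms by (cases xs) auto
    obtain J where J: "J \<subseteq> ?A" "card J = card ?A - i" "u \<in> J"
      "diameter (?x ` J) \<le> 2 * cluster_scale ?x ?A i"
      using central_indexD[OF central, of i] i by auto
    have "local_cluster_scale ?x ?A i (xs ! u) \<le> diameter (?x ` J)"
      using local_cluster_scale_le[OF _ J(1,2,3)] by simp
    moreover have "cluster_scale ?x ?A i \<le> local_cluster_scale ?x ?A i (xs ! u)"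
      using cluster_scale_le_local[of ?A u i ?x] u i' by simp
    ultimately show ?thesis
      using J(4) i'
        unfolding sim_by_def Lloc_eq_local_cluster_scale[OF i'] Labs_eq_cluster_scale[OF i']
      by simp
  qed
  moreover have "xs ! u \<in> set xs" using u by simp
  ultimately show ?thesis by blast
qed

lemma Delta_sim_prod_Labs:
  assumes "2 * r \<le> length xs"
  shows "sim_by (1 / 2 ^ (r * r)) 1 (Delta xs r) (\<Prod>k<r. Labs xs k)"
proof -
  let ?A = "{..<length xs}" and ?x = "nth xs"
  let ?S = "{pair_prod ?x f r | f. inj_on f {..<2*r} \<and> f ` {..<2*r} \<subseteq> ?A}"
  have L: "(\<Prod>k<r. Labs xs k) = (\<Prod>k<r. cluster_scale ?x ?A k)"
    using assms by (intro prod.cong) (auto simp: Labs_eq_cluster_scale)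
  have upper: "z \<le> (\<Prod>k<r. cluster_scale ?x ?A k)" if "z \<in> ?S" for z
    using that pair_prod_le_prod_cluster_scales[of ?A] by blast
  obtain f where f: "inj_on f {..<2*r}" "f ` {..<2*r} \<subseteq> ?A"
    "(\<Prod>i<r. cluster_scale ?x ?A i) \<le> 2 ^ (r * r) * pair_prod ?x f r"
    using pair_prod_lower_bound[of ?A r ?x] assms by auto
  have "pair_prod ?x f r \<le> Sup ?S"
    using f(1,2) upper by (intro cSup_upper) (auto simp: bdd_above_def)
  then have "(\<Prod>k<r. cluster_scale ?x ?A k) \<le> 2 ^ (r * r) * Sup ?S"
    using order_trans[OF f(3) mult_left_mono] by simp
  moreover have "Sup ?S \<le> (\<Prod>k<r. cluster_scale ?x ?A k)"
    using f(1,2) upper by (intro cSup_least) auto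
  ultimately show ?thesis
    unfolding sim_by_def Delta_eq_Sup_pair_prod L by (simp add: field_simps)
qed

lemma Delta_eq_Max_tuple_values:
  assumes "2 * r \<le> length xs"
  shows "Delta xs r = Max (norm ` set (tuple_values (\<lambda>w. \<Prod>\<nu><r. w \<nu> - w (r + \<nu>)) xs (2 * r)))"
proof -
  let ?T = "set (distinct_tuples (length xs) (2 * r))"
  have norm_value:
    "norm (\<Prod>\<nu><r. xs ! (js ! \<nu>) - xs ! (js ! (r + \<nu>))) = pair_prod (nth xs) (nth js) r" for js
    unfolding pair_prod_def by (simp add: prod_norm dist_norm)
  have "{pair_prod (nth xs) f r | f. inj_on f {..<2*r} \<and> f ` {..<2*r} \<subseteq> {..<length xs}}
      = (\<lambda>js. pair_prod (nth xs) (nth js) r) ` ?T"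
  proof (intro equalityI subsetI)
    fix d assume "d \<in> {pair_prod (nth xs) f r | f. inj_on f {..<2*r} \<and> f ` {..<2*r} \<subseteq> {..<length xs}}"
    then obtain f where f: "d = pair_prod (nth xs) f r" "inj_on f {..<2*r}" "f ` {..<2*r} \<subseteq> {..<length xs}"
      by blast
    have "pair_prod (nth xs) f r = pair_prod (nth xs) (nth (map f [0..<2*r])) r"
      unfolding pair_prod_def by (intro prod.cong) auto
    then show "d \<in> (\<lambda>js. pair_prod (nth xs) (nth js) r) ` ?T"
      using f map_inj_on_in_distinct_tuples[OF f(2,3)] by blast
  qed (use distinct_tuple_inj_on in blast)
  moreover have "?T \<noteq> {}" using distinct_tuples_ne[OF assms] by simp
  ultimately show ?thesis
    unfolding Delta_eq_Sup_pair_prod tuple_values_def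
    by (simp add: image_image norm_value cSup_eq_Max)
qed

lemma int_poly_of_psum_acoeff:
  "int_poly_of N (\<lambda>xs j. acoeff xs (Suc j)) {xs. length xs = N} (psum m)"
  using int_poly_of_psum_if_sym_coeff[where ys = "\<lambda>xs. xs", OF int_poly_of_sym_coeff_acoeff] by simp

lemma Delta_sim_coeff_poly_gauge:
  assumes "2 * r \<le> N"
  shows "\<exists>h::nat. h \<ge> 1 \<and> (\<exists>D :: nat \<Rightarrow> int_mpoly. (\<forall>q\<in>{1..h}. mpoly_vars N (D q)) \<and>
     (\<exists>c>0. \<exists>C>0. \<forall>xs. length xs = N \<longrightarrow>
        sim_by c C (Delta xs r)
          (\<Sum>q=1..h. cmod (mpoly_eval (D q) (\<lambda>j. acoeff xs (Suc j))) powr (1 / real q))))"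
proof -
  let ?g = "\<lambda>w. \<Prod>\<nu><r. w \<nu> - w (r + \<nu>) :: complex"
  have g: "int_poly_fun (2 * r) ?g"
    unfolding int_poly_fun_iff_int_poly_of
      by (intro int_poly_of_prod int_poly_of_diff int_poly_of_var) auto
  have len: "\<And>xs. xs \<in> {xs. length xs = N} \<Longrightarrow> length xs = N" by simp
  have "\<exists>M\<ge>1. \<exists>\<sigma>. (\<forall>q. mpoly_vars N (\<sigma> q)) \<and> (\<exists>c>0. \<exists>C>0. \<forall>xs\<in>{xs. length xs = N}.
      sim_by c C (Max (norm ` set (tuple_values ?g xs (2 * r))))
        (\<Sum>q=1..M. cmod (mpoly_eval (\<sigma> q) (\<lambda>j. acoeff xs (Suc j))) powr (1 / real q)))"
    by (rule Max_norm_tuple_values_sim_poly_gauge[where zs = "\<lambda>xs. xs",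
          OF g assms len int_poly_of_psum_acoeff[of N]])
  then show ?thesis
    using Delta_eq_Max_tuple_values[of r] assms by auto
qed

lemma norm_tuple_values_prod_minus:
  fixes xs :: "'a::real_normed_field list"
  shows "norm ` set (tuple_values (\<lambda>w. \<Prod>t<K. w t) (map (\<lambda>x. x - a) xs) K)
    = (\<lambda>js. \<Prod>t<K. dist (xs ! (js ! t)) a) ` set (distinct_tuples (length xs) K)"
proof -
  have "norm (\<Prod>t<K. map (\<lambda>x. x - a) xs ! (js ! t)) = (\<Prod>t<K. dist (xs ! (js ! t)) a)"
    if "js \<in> set (distinct_tuples (length xs) K)" for js
  proof -
    have "(\<Prod>t<K. map (\<lambda>x. x - a) xs ! (js ! t)) = (\<Prod>t<K. xs ! (js ! t) - a)"
      using distinct_tuple_inj_on(2)[OF that] by (intro prod.cong) auto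
    then show ?thesis by (simp add: prod_norm dist_norm)
  qed
  then show ?thesis unfolding tuple_values_def by (auto simp: image_image intro: image_cong)
qed

lemma prod_Lloc_sim_Max_tuple_values:
  assumes \<alpha>: "\<alpha> \<in> set xs" and k: "Suc k < length xs"
  shows "sim_by 1 (2 ^ Suc k) (\<Prod>i\<le>k. Lloc xs i \<alpha>)
    (Max (norm ` set (tuple_values (\<lambda>w. \<Prod>t<Suc k. w t) (map (\<lambda>x. x - \<alpha>) xs) (Suc k))))"
proof -
  let ?A = "{..<length xs}" and ?x = "nth xs" and ?K = "Suc k"
  let ?T = "set (distinct_tuples (length xs) ?K)"
  let ?d = "\<lambda>js. \<Prod>t<?K. dist (xs ! (js ! t)) \<alpha>"
  obtain i0 where i0: "i0 \<in> ?A" "xs ! i0 = \<alpha>" using \<alpha> by (auto simp: in_set_conv_nth)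
  have P: "(\<Prod>i\<le>k. Lloc xs i \<alpha>) = (\<Prod>i<?K. local_cluster_scale ?x ?A i (?x i0))"
    using k i0(2) by (simp add: lessThan_Suc_atMost[symmetric] Lloc_eq_local_cluster_scale)
  have "distinct_tuples (length xs) ?K \<noteq> []" by (rule distinct_tuples_ne) (use k in linarith)
  then have "?T \<noteq> {}" by (simp only: set_empty not_False_eq_True)
  then have fin: "finite (?d ` ?T)" "?d ` ?T \<noteq> {}" by auto
  have "Max (?d ` ?T) \<le> (\<Prod>i<?K. local_cluster_scale ?x ?A i (?x i0))"
  proof (rule Max.boundedI[OF fin])
    fix d assume "d \<in> ?d ` ?T"
    then obtain js where "js \<in> ?T" "d = ?d js" by blast
    then show "d \<le> (\<Prod>i<?K. local_cluster_scale ?x ?A i (?x i0))"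
      using tuple_dist_prod_le_prod_local_cluster_scales[of ?A i0 ?K "nth js" ?x]
        distinct_tuple_inj_on i0 k by auto
  qed
  moreover obtain f where f: "inj_on f {..<?K}" "f ` {..<?K} \<subseteq> ?A"
    "(\<Prod>i<?K. local_cluster_scale ?x ?A i (?x i0)) \<le> 2 ^ ?K * (\<Prod>t<?K. dist (?x (f t)) (?x i0))"
    using prod_local_cluster_scales_le_tuple_dist_prod[of ?A i0 ?K ?x] i0(1) k by auto
  moreover have f_le: "(\<Prod>t<?K. dist (?x (f t)) (?x i0)) \<le> Max (?d ` ?T)"
  proof -
    have "(\<Prod>t<?K. dist (?x (f t)) (?x i0)) = ?d (map f [0..<?K])"
      using i0(2) by (intro prod.cong) (simp_all del: upt_Suc)
    then show ?thesis using Max_ge[OF fin(1)] map_inj_on_in_distinct_tuples[OF f(1,2)] by simp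
  qed
  ultimately show ?thesis
    unfolding sim_by_def P norm_tuple_values_prod_minus
      using order_trans[OF f(3) mult_left_mono[OF f_le]] by simp
qed

lemma psum_map_minus:
  "psum m (map (\<lambda>x. x - a) xs) = (\<Sum>l\<le>m. of_nat (m choose l) * (- a) ^ (m - l) * psum l xs)"
proof -
  have "psum m (map (\<lambda>x. x - a) xs) = (\<Sum>x\<leftarrow>xs. \<Sum>l\<le>m. of_nat (m choose l) * x ^ l * (- a) ^ (m - l))"
    unfolding psum_def by (simp add: comp_def binomial_ring[of _ "- a", simplified])
  also have "\<dots> = (\<Sum>l\<le>m. of_nat (m choose l) * (- a) ^ (m - l) * psum l xs)"
    unfolding sum_list_sum_swap psum_def
    by (simp add: sum_list_const_mult[symmetric] sum_list_mult_const[symmetric] algebra_simps)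
  finally show ?thesis .
qed

lemma int_poly_of_psum_shifted_roots:
  "int_poly_of (N + 1) (\<lambda>z j. if j < N then acoeff (fst z) (Suc j) else snd z) {z. length (fst z) = N}
    (\<lambda>z. psum m (map (\<lambda>x. x - snd z) (fst z)))"
  (is "int_poly_of _ ?v ?D _")
proof -
  have "int_poly_of (N + 1) ?v ?D (\<lambda>z. psum l (fst z))" for l
  proof (rule int_poly_of_compose[OF int_poly_of_psum_acoeff])
    fix j assume "j < N"
    then show "int_poly_of (N + 1) ?v ?D (\<lambda>z. acoeff (fst z) (Suc j))"
      using int_poly_of_var[of j "N + 1" ?v ?D] by simp
  qed auto
  moreover have "int_poly_of (N + 1) ?v ?D (\<lambda>z. snd z)"
    using int_poly_of_var[of N "N + 1" ?v ?D] by simp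
  ultimately show ?thesis
    unfolding psum_map_minus
    by (intro int_poly_of_sum int_poly_of_mult int_poly_of_power int_poly_of_uminus int_poly_of_of_nat)
qed

lemma prod_Lloc_sim_coeff_poly_gauge:
  assumes k: "Suc k < N"
  shows "\<exists>m::nat. m \<ge> 1 \<and> (\<exists>\<sigma> :: nat \<Rightarrow> int_mpoly. (\<forall>i\<in>{1..m}. mpoly_vars (N + 1) (\<sigma> i)) \<and>
     (\<exists>c>0. \<exists>C>0. \<forall>xs. length xs = N \<longrightarrow> (\<forall>\<alpha>\<in>set xs.
        sim_by c C (\<Prod>i\<le>k. Lloc xs i \<alpha>)
          (\<Sum>i=1..m. cmod (mpoly_eval (\<sigma> i)
               (\<lambda>j. if j < N then acoeff xs (Suc j) else \<alpha>)) powr (1 / real i)))))"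
proof -
  let ?g = "\<lambda>w. \<Prod>t<Suc k. w t :: complex"
  let ?D = "{z :: complex list \<times> complex. length (fst z) = N}"
  let ?v = "\<lambda>z j. if j < N then acoeff (fst z) (Suc j) else snd z"
  let ?zs = "\<lambda>z. map (\<lambda>x. x - snd z) (fst z)"
  have g: "int_poly_fun (Suc k) ?g"
    unfolding int_poly_fun_iff_int_poly_of by (intro int_poly_of_prod int_poly_of_var) auto
  have len: "\<And>z. z \<in> ?D \<Longrightarrow> length (?zs z) = N" by simp
  note psum = int_poly_of_psum_shifted_roots[of N]
  obtain M \<sigma> c C where M: "1 \<le> M" "\<forall>q. mpoly_vars (N + 1) (\<sigma> q)" "0 < c" "0 < C"
    "\<forall>z\<in>?D. sim_by c C (Max (norm ` set (tuple_values ?g (?zs z) (Suc k))))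
        (\<Sum>q=1..M. cmod (mpoly_eval (\<sigma> q) (?v z)) powr (1 / real q))"
    using Max_norm_tuple_values_sim_poly_gauge[OF g _ len psum] k by fastforce
  have "sim_by (1 * c) (2 ^ Suc k * C) (\<Prod>i\<le>k. Lloc xs i \<alpha>)
      (\<Sum>q=1..M. cmod (mpoly_eval (\<sigma> q) (\<lambda>j. if j < N then acoeff xs (Suc j) else \<alpha>)) powr (1 / real q))"
    if "length xs = N" "\<alpha> \<in> set xs" for xs \<alpha>
    using sim_by_trans[OF prod_Lloc_sim_Max_tuple_values
        M(5)[rule_format, of "(xs, \<alpha>)", unfolded fst_conv snd_conv]] that k
    by simp
  then show ?thesis using M(1-4)
    by (intro exI[of _ M] exI[of _ \<sigma>] conjI exI[of _ c] exI[of _ "2 ^ Suc k * C"]) auto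
qed

theorem theorem2:
  fixes N :: nat
  assumes "N \<ge> 2"
  shows
   "(\<exists>c>0. \<exists>C>0. \<forall>xs. length xs = N \<longrightarrow>
       (\<exists>\<alpha>\<in>set xs. \<forall>i. 2 * i \<le> N \<longrightarrow> sim_by c C (Lloc xs i \<alpha>) (Labs xs i)))
    \<and> (\<exists>c>0. \<exists>C>0. \<forall>xs r. length xs = N \<longrightarrow> 1 \<le> r \<longrightarrow> 2 * r \<le> N \<longrightarrow>
       sim_by c C (Delta xs r) (\<Prod>k<r. Labs xs k))
    \<and> (\<forall>r. 1 \<le> r \<longrightarrow> 2 * r \<le> N \<longrightarrow>
       (\<exists>h::nat. h \<ge> 1 \<and> (\<exists>D :: nat \<Rightarrow> int_mpoly. (\<forall>q\<in>{1..h}. mpoly_vars N (D q)) \<and>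
         (\<exists>c>0. \<exists>C>0. \<forall>xs. length xs = N \<longrightarrow>
            sim_by c C (Delta xs r)
              (\<Sum>q=1..h. cmod (mpoly_eval (D q) (\<lambda>j. acoeff xs (Suc j))) powr (1 / real q))))))
    \<and> (\<forall>k. k \<le> N - 2 \<longrightarrow>
       (\<exists>m::nat. m \<ge> 1 \<and> (\<exists>\<sigma> :: nat \<Rightarrow> int_mpoly. (\<forall>i\<in>{1..m}. mpoly_vars (N + 1) (\<sigma> i)) \<and>
         (\<exists>c>0. \<exists>C>0. \<forall>xs. length xs = N \<longrightarrow> (\<forall>\<alpha>\<in>set xs.
            sim_by c C (\<Prod>i\<le>k. Lloc xs i \<alpha>)
              (\<Sum>i=1..m. cmod (mpoly_eval (\<sigma> i)
                   (\<lambda>j. if j < N then acoeff xs (Suc j) else \<alpha>)) powr (1 / real i)))))))"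
proof -
  have "xs \<noteq> []" if "length xs = N" for xs :: "complex list" using that assms by auto
  then have i: "\<exists>c>0. \<exists>C>0. \<forall>xs. length xs = N \<longrightarrow>
      (\<exists>\<alpha>\<in>set xs. \<forall>i. 2 * i \<le> N \<longrightarrow> sim_by c C (Lloc xs i \<alpha>) (Labs xs i))"
    using exists_root_Lloc_sim_Labs by (intro exI[of _ 1] exI[of _ 2] conjI) auto
  have "sim_by (1 / 2 ^ (N * N)) 1 (Delta xs r) (\<Prod>k<r. Labs xs k)" if "length xs = N" "2 * r \<le> N"
    for xs :: "complex list" and r
  proof (rule sim_by_mono[OF Delta_sim_prod_Labs _ order_refl])
    have "r * r \<le> N * N" using that(2) by (simp add: mult_le_mono)
    then show "1 / 2 ^ (N * N) \<le> (1 / 2 ^ (r * r) :: real)" by (intro frac_le power_increasing) auto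
    show "0 \<le> (\<Prod>k<r. Labs xs k)"
      using that by (intro prod_nonneg) (auto simp: Labs_eq_cluster_scale cluster_scale_nonneg)
  qed (use that in auto)
  then have ii: "\<exists>c>0. \<exists>C>0. \<forall>xs r. length xs = N \<longrightarrow> 1 \<le> r \<longrightarrow> 2 * r \<le> N \<longrightarrow>
      sim_by c C (Delta xs r) (\<Prod>k<r. Labs xs k)"
    by (intro exI[of _ "1 / 2 ^ (N * N)"] exI[of _ 1] conjI) auto
  have N: "Suc k < N" if "k \<le> N - 2" for k using that assms by linarith
  show ?thesis
    by (intro conjI allI impI i ii Delta_sim_coeff_poly_gauge prod_Lloc_sim_coeff_poly_gauge[OF N])
qed

end
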